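(* Let $S$ be a set of $n$ points in the plane in convex position. Then the number of non-crossing path partitions (ncp partitions) that $S$ admits is $\mathcal{O}^*(5.610718614^n)$.
   Context: A non-crossing graph on a finite point set $S$ in the plane is a graph with vertex set $S$ whose edges are straight line segments, no two of which cross. A non-crossing path partition (ncp partition) of $S$ is a non-crossing graph on $S$ every connected component of which is a path; isolated vertices (singletons) are allowed and are regarded as paths of length $0$. The notation $\mathcal{O}^*(c^n)$ means $O(p(n)\,c^n)$ for some polynomial $p$, i.e. polynomial factors are neglected and only the dominating exponential term is given. *)

theory Defs
  imports "HOL-Analysis.Analysis"
begin

type_synonym point = "real \<times> real"

definition convex_position :: "point set \<Rightarrow> bool" where
  "convex_position S \<longleftrightarrow> (\<forall>p\<in>S. p \<notin> convex hull (S - {p}))"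

text \<open>Straight-line edges on S are 2-element subsets of S; the drawn edge is their convex hull
  (the closed segment).\<close>
definition edges_on :: "point set \<Rightarrow> point set set \<Rightarrow> bool" where
  "edges_on S E \<longleftrightarrow> (\<forall>e\<in>E. \<exists>a b. a \<in> S \<and> b \<in> S \<and> a \<noteq> b \<and> e = {a, b})"

definition non_crossing :: "point set set \<Rightarrow> bool" where
  "non_crossing E \<longleftrightarrow>
     (\<forall>e1\<in>E. \<forall>e2\<in>E. e1 \<noteq> e2 \<longrightarrow> convex hull e1 \<inter> convex hull e2 \<subseteq> e1 \<inter> e2)"

definition adj :: "point set set \<Rightarrow> (point \<times> point) set" where
  "adj E = {(a, b). {a, b} \<in> E}"

definition component :: "point set \<Rightarrow> point set set \<Rightarrow> point \<Rightarrow> point set" where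
  "component S E v = {w \<in> S. (v, w) \<in> (adj E)\<^sup>*}"

definition is_path_component :: "point set set \<Rightarrow> point set \<Rightarrow> bool" where
  "is_path_component E C \<longleftrightarrow>
     (\<exists>vs. distinct vs \<and> set vs = C \<and>
        {e \<in> E. e \<subseteq> C} = {{vs ! i, vs ! Suc i} | i. Suc i < length vs})"

definition ncp_partition :: "point set \<Rightarrow> point set set \<Rightarrow> bool" where
  "ncp_partition S E \<longleftrightarrow> edges_on S E \<and> non_crossing E \<and>
     (\<forall>v\<in>S. is_path_component E (component S E v))"

end

theory Submission
  imports Defs
begin

text \<open>Order the points counterclockwise as \<open>0, \<dots>, n - 1\<close>. Two chords then cross exactly when
  their endpoints interleave, so an ncp partition becomes a linear forest on \<open>{..<n}\<close> without
  interleaving edges, and it is recovered from that forest. Such forests are counted through the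
  degree of vertex \<open>0\<close>: removing it, or cutting at its one or two neighbours, leaves independent
  forests on intervals, whose end vertices may have to be leaves and, when both ends are leaves,
  may have to lie on different paths (otherwise a cycle closes through \<open>0\<close>). This gives
  convolution inequalities for the number \<open>A n\<close> of all such forests, \<open>G n\<close> of those with a leaf at
  the first vertex, and \<open>X n\<close> of those with leaves at both ends on different paths. At
  \<open>\<rho> = 1 / 5.610718614\<close> the partial sums of the generating functions of \<open>A\<close>, \<open>G\<close>, \<open>X\<close> stay below an
  explicit post-fixed point \<open>(1.59333, 0.1866\<dots>, 0.0218\<dots>)\<close> of these inequalities, whence
  \<open>A n \<le> 1.59333 \<cdot> 5.610718614 ^ n\<close>.\<close>

section \<open>Growth of sequences satisfying convolution inequalities\<close>

lemma convolution_le_product: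
  fixes u v :: "nat \<Rightarrow> real"
  assumes "\<And>i. 0 \<le> u i" "\<And>i. 0 \<le> v i"
  shows "(\<Sum>m\<le>M. \<Sum>i\<le>m. u i * v (m - i)) \<le> (\<Sum>i\<le>M. u i) * (\<Sum>j\<le>M. v j)"
proof -
  have "(\<Sum>m\<le>M. \<Sum>i\<le>m. u i * v (m - i)) = (\<Sum>(i,j)\<in>{(i,j). i + j \<le> M}. u i * v j)"
    using sum.triangle_reindex_eq[of "\<lambda>i j. u i * v j" M] by simp
  also have "\<dots> \<le> (\<Sum>(i,j)\<in>{..M}\<times>{..M}. u i * v j)"
    by (rule sum_mono2) (auto intro: mult_nonneg_nonneg assms)
  also have "\<dots> = (\<Sum>i\<le>M. u i) * (\<Sum>j\<le>M. v j)"
    by (simp add: sum_product sum.cartesian_product)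
  finally show ?thesis .
qed

lemma convolution3_le_product:
  fixes u v w :: "nat \<Rightarrow> real"
  assumes "\<And>i. 0 \<le> u i" "\<And>i. 0 \<le> v i" "\<And>i. 0 \<le> w i"
  shows "(\<Sum>m\<le>M. \<Sum>l\<le>m. \<Sum>k\<le>m-l. u l * v k * w (m - l - k))
     \<le> (\<Sum>i\<le>M. u i) * (\<Sum>i\<le>M. v i) * (\<Sum>i\<le>M. w i)"
proof -
  define z where "z s = (\<Sum>k\<le>s. v k * w (s - k))" for s
  have z_nonneg: "0 \<le> z s" for s
    unfolding z_def by (intro sum_nonneg mult_nonneg_nonneg assms)
  have "(\<Sum>m\<le>M. \<Sum>l\<le>m. \<Sum>k\<le>m-l. u l * v k * w (m - l - k)) = (\<Sum>m\<le>M. \<Sum>l\<le>m. u l * z (m - l))"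
    unfolding z_def by (simp add: sum_distrib_left mult.assoc diff_diff_left)
  also have "\<dots> \<le> (\<Sum>i\<le>M. u i) * (\<Sum>j\<le>M. z j)"
    by (rule convolution_le_product) (auto intro: assms z_nonneg)
  also have "\<dots> \<le> (\<Sum>i\<le>M. u i) * ((\<Sum>i\<le>M. v i) * (\<Sum>i\<le>M. w i))"
    unfolding z_def by (intro mult_left_mono convolution_le_product sum_nonneg assms)
  finally show ?thesis by (simp add: mult.assoc)
qed

lemma sum_atMost_shift_le:
  fixes f :: "nat \<Rightarrow> real"
  assumes "\<And>i. 0 \<le> f i"
  shows "(\<Sum>i\<le>M. f (i + k)) \<le> (\<Sum>i\<le>M + k. f i)"
proof -
  have "(\<Sum>i\<le>M. f (i + k)) = (\<Sum>i\<in>(\<lambda>i. i + k) ` {..M}. f i)"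
    by (simp add: sum.reindex)
  also have "\<dots> \<le> (\<Sum>i\<le>M + k. f i)"
    by (rule sum_mono2) (auto intro: assms)
  finally show ?thesis .
qed

lemma sum_atMost_shift_eq:
  fixes f :: "nat \<Rightarrow> real"
  assumes "\<And>i. i < k \<Longrightarrow> f i = 0"
  shows "(\<Sum>i\<le>M + k. f i) = (\<Sum>i\<le>M. f (i + k))"
proof -
  have "{..M + k} = {..<k} \<union> (\<lambda>i. i + k) ` {..M}"
  proof (intro equalityI subsetI)
    fix x assume "x \<in> {..M + k}"
    then show "x \<in> {..<k} \<union> (\<lambda>i. i + k) ` {..M}"
      by (cases "x < k") (auto simp: image_iff intro!: bexI[of _ "x - k"])
  qed auto
  then have "(\<Sum>i\<le>M + k. f i) = (\<Sum>i<k. f i) + (\<Sum>i\<in>(\<lambda>i. i + k) ` {..M}. f i)"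
    by (simp only:) (rule sum.union_disjoint; auto)
  also have "\<dots> = (\<Sum>i\<le>M. f (i + k))"
    using assms by (simp add: sum.reindex)
  finally show ?thesis .
qed

lemma leaf_partial_sum_step:
  fixes p q :: "nat \<Rightarrow> real"
  assumes p: "\<And>n. 0 \<le> p n" and q: "\<And>n. 0 \<le> q n" and \<rho>: "0 \<le> \<rho>"
    and q_start: "q 0 = 0" "q 1 = 0"
    and rec: "\<And>m. q (m + 2) \<le> \<rho> * (\<Sum>i\<le>m. q (i + 1) * p (m - i) + p i * (\<rho> * p (m - i) + q (m - i + 1)))"
    and \<alpha>: "(\<Sum>n\<le>M. p n) \<le> \<alpha>" and \<gamma>: "(\<Sum>n\<le>M + 1. q n) \<le> \<gamma>"
  shows "(\<Sum>n\<le>M + 2. q n) \<le> \<rho> * (\<gamma> * \<alpha> + \<alpha> * (\<rho> * \<alpha> + \<gamma>))"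
proof -
  define P Q where "P = (\<Sum>i\<le>M. p i)" and "Q = (\<Sum>i\<le>M. q (i + 1))"
  have bounds: "0 \<le> P" "P \<le> \<alpha>" "0 \<le> Q" "Q \<le> \<gamma>"
    unfolding P_def Q_def using p q \<alpha> order_trans[OF sum_atMost_shift_le[where k = 1] \<gamma>]
    by (auto intro: sum_nonneg)
  have "(\<Sum>n\<le>M + 2. q n) = (\<Sum>m\<le>M. q (m + 2))"
    using q_start by (intro sum_atMost_shift_eq) (auto simp: less_2_cases_iff)
  also have "\<dots> \<le> (\<Sum>m\<le>M. \<rho> * (\<Sum>i\<le>m. q (i + 1) * p (m - i) + p i * (\<rho> * p (m - i) + q (m - i + 1))))"
    by (intro sum_mono rec)
  also have "\<dots> = \<rho> * ((\<Sum>m\<le>M. \<Sum>i\<le>m. q (i + 1) * p (m - i))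
      + (\<Sum>m\<le>M. \<Sum>i\<le>m. p i * (\<rho> * p (m - i) + q (m - i + 1))))"
    by (simp add: sum.distrib distrib_left flip: sum_distrib_left)
  also have "\<dots> \<le> \<rho> * (Q * P + P * (\<Sum>j\<le>M. \<rho> * p j + q (j + 1)))"
    unfolding P_def Q_def using p q \<rho> by (intro mult_left_mono add_mono convolution_le_product) auto
  also have "(\<Sum>j\<le>M. \<rho> * p j + q (j + 1)) = \<rho> * P + Q"
    unfolding P_def Q_def by (simp add: sum.distrib sum_distrib_left)
  also have "\<rho> * (Q * P + P * (\<rho> * P + Q)) \<le> \<rho> * (\<gamma> * \<alpha> + \<alpha> * (\<rho> * \<alpha> + \<gamma>))"
    using bounds \<rho> by (intro mult_left_mono add_mono mult_mono) auto
  finally show ?thesis .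
qed

lemma apart_partial_sum_step:
  fixes p q r :: "nat \<Rightarrow> real"
  assumes p: "\<And>n. 0 \<le> p n" and q: "\<And>n. 0 \<le> q n" and r: "\<And>n. 0 \<le> r n" and \<rho>: "0 \<le> \<rho>"
    and r_start: "r 0 = 0" "r 1 = 0" "r 2 = 0"
    and rec: "\<And>m. r (m + 3) \<le> \<rho> * (\<Sum>l\<le>m. q (l + 1) * q (m - l + 1) + p l * (r (m - l + 2) + \<rho> * q (m - l + 1)))"
    and \<alpha>: "(\<Sum>n\<le>M. p n) \<le> \<alpha>" and \<gamma>: "(\<Sum>n\<le>M + 1. q n) \<le> \<gamma>" and \<xi>: "(\<Sum>n\<le>M + 2. r n) \<le> \<xi>"
  shows "(\<Sum>n\<le>M + 3. r n) \<le> \<rho> * (\<gamma> * \<gamma> + \<alpha> * (\<xi> + \<rho> * \<gamma>))"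
proof -
  define P Q R where "P = (\<Sum>i\<le>M. p i)" and "Q = (\<Sum>i\<le>M. q (i + 1))" and "R = (\<Sum>i\<le>M. r (i + 2))"
  have bounds: "0 \<le> P" "P \<le> \<alpha>" "0 \<le> Q" "Q \<le> \<gamma>" "0 \<le> R" "R \<le> \<xi>"
    unfolding P_def Q_def R_def using p q r \<alpha> order_trans[OF sum_atMost_shift_le[where k = 1] \<gamma>]
      order_trans[OF sum_atMost_shift_le[where k = 2] \<xi>]
    by (auto intro: sum_nonneg)
  have "(\<Sum>n\<le>M + 3. r n) = (\<Sum>m\<le>M. r (m + 3))"
    using r_start by (intro sum_atMost_shift_eq) (auto simp: less_Suc_eq numeral_3_eq_3 numeral_2_eq_2)
  also have "\<dots> \<le> (\<Sum>m\<le>M. \<rho> * (\<Sum>l\<le>m. q (l + 1) * q (m - l + 1) + p l * (r (m - l + 2) + \<rho> * q (m - l + 1))))"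
    by (intro sum_mono rec)
  also have "\<dots> = \<rho> * ((\<Sum>m\<le>M. \<Sum>l\<le>m. q (l + 1) * q (m - l + 1))
      + (\<Sum>m\<le>M. \<Sum>l\<le>m. p l * (r (m - l + 2) + \<rho> * q (m - l + 1))))"
    by (simp add: sum.distrib distrib_left flip: sum_distrib_left)
  also have "\<dots> \<le> \<rho> * (Q * Q + P * (\<Sum>j\<le>M. r (j + 2) + \<rho> * q (j + 1)))"
    unfolding P_def Q_def
    using convolution_le_product[of "\<lambda>i. q (i + 1)" "\<lambda>j. q (j + 1)" M]
      convolution_le_product[of p "\<lambda>j. r (j + 2) + \<rho> * q (j + 1)" M] p q r \<rho>
    by (intro mult_left_mono add_mono) auto
  also have "(\<Sum>j\<le>M. r (j + 2) + \<rho> * q (j + 1)) = R + \<rho> * Q"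
    unfolding Q_def R_def by (simp add: sum.distrib sum_distrib_left)
  also have "\<rho> * (Q * Q + P * (R + \<rho> * Q)) \<le> \<rho> * (\<gamma> * \<gamma> + \<alpha> * (\<xi> + \<rho> * \<gamma>))"
    using bounds \<rho> by (intro mult_left_mono add_mono mult_mono) auto
  finally show ?thesis .
qed

text \<open>The count for a vertex with two neighbours that cut the remaining vertices into arcs with
  \<open>l\<close>, \<open>k\<close>, \<open>r\<close> vertices: \<open>a\<close>, \<open>g\<close>, \<open>x\<close> count the arcs with no condition, with a leaf at a prescribed
  end, and with leaves at both ends that lie on different paths; \<open>d\<close> counts an outer arc together
  with the neighbour bounding it.\<close>
definition two_neighbour_terms ::
    "(nat \<Rightarrow> 'a::comm_semiring_1) \<Rightarrow> (nat \<Rightarrow> 'a) \<Rightarrow> (nat \<Rightarrow> 'a) \<Rightarrow> (nat \<Rightarrow> 'a) \<Rightarrow> nat \<Rightarrow> nat \<Rightarrow> nat \<Rightarrow> 'a" where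
  "two_neighbour_terms a d g x l k r =
     d l * a k * d r + d l * g (k + 1) * a r + a l * g (k + 1) * d r + a l * x (k + 2) * a r"

lemma two_neighbour_terms_sum_le:
  fixes a d g x :: "nat \<Rightarrow> real" and K :: nat
  assumes "\<And>i. 0 \<le> a i" "\<And>i. 0 \<le> d i" "\<And>i. 0 \<le> g i" "\<And>i. 0 \<le> x i"
  defines "A \<equiv> \<Sum>i\<le>K. a i" and "D \<equiv> \<Sum>i\<le>K. d i" and "G \<equiv> \<Sum>i\<le>K. g (i + 1)" and "X \<equiv> \<Sum>i\<le>K. x (i + 2)"
  shows "(\<Sum>m\<le>K. \<Sum>l\<le>m. \<Sum>k\<le>m-l. two_neighbour_terms a d g x l k (m - l - k))
    \<le> D * A * D + D * G * A + A * G * D + A * X * A"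
proof -
  have "(\<Sum>m\<le>K. \<Sum>l\<le>m. \<Sum>k\<le>m-l. two_neighbour_terms a d g x l k (m - l - k))
      = (\<Sum>m\<le>K. \<Sum>l\<le>m. \<Sum>k\<le>m-l. d l * a k * d (m - l - k))
      + (\<Sum>m\<le>K. \<Sum>l\<le>m. \<Sum>k\<le>m-l. d l * g (k + 1) * a (m - l - k))
      + (\<Sum>m\<le>K. \<Sum>l\<le>m. \<Sum>k\<le>m-l. a l * g (k + 1) * d (m - l - k))
      + (\<Sum>m\<le>K. \<Sum>l\<le>m. \<Sum>k\<le>m-l. a l * x (k + 2) * a (m - l - k))"
    by (simp add: two_neighbour_terms_def sum.distrib)
  also have "\<dots> \<le> D * A * D + D * G * A + A * G * D + A * X * A"
    unfolding A_def D_def G_def X_def using assms(1-4) by (intro add_mono convolution3_le_product) auto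
  finally show ?thesis .
qed

lemma ncps_partial_sum_step:
  fixes p q r :: "nat \<Rightarrow> real" and K :: nat
  assumes p: "\<And>n. 0 \<le> p n" and q: "\<And>n. 0 \<le> q n" and r: "\<And>n. 0 \<le> r n" and \<rho>: "0 \<le> \<rho>"
    and p_start: "p 0 \<le> 1" and rec1: "p 1 \<le> \<rho> * p 0 + q 1" and rec2: "p 2 \<le> \<rho> * p 1 + q 2"
    and rec: "\<And>m. p (m + 3) \<le> \<rho> * p (m + 2) + q (m + 3)
       + \<rho> * (\<Sum>l\<le>m. \<Sum>k\<le>m-l. two_neighbour_terms p (\<lambda>i. \<rho> * p i + q (i + 1)) q r l k (m - l - k))"
    and \<alpha>: "(\<Sum>n\<le>K + 2. p n) \<le> \<alpha>" and \<gamma>: "(\<Sum>n\<le>K + 3. q n) \<le> \<gamma>" and \<xi>: "(\<Sum>n\<le>K + 2. r n) \<le> \<xi>"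
  shows "(\<Sum>n\<le>K + 3. p n) \<le> 1 + \<rho> * \<alpha> + \<gamma> + \<rho> * ((\<rho> * \<alpha> + \<gamma>) * \<alpha> * (\<rho> * \<alpha> + \<gamma>)
    + (\<rho> * \<alpha> + \<gamma>) * \<gamma> * \<alpha> + \<alpha> * \<gamma> * (\<rho> * \<alpha> + \<gamma>) + \<alpha> * \<xi> * \<alpha>)"
proof -
  define d where "d i = \<rho> * p i + q (i + 1)" for i
  have d: "0 \<le> d i" for i
    unfolding d_def using p q \<rho> by simp
  define e where "e n = (if n < 3 then 0
    else \<rho> * (\<Sum>l\<le>n-3. \<Sum>k\<le>n-3-l. two_neighbour_terms p d q r l k (n - 3 - l - k)))" for n
  have step: "p (Suc n) \<le> \<rho> * p n + q (Suc n) + e (Suc n)" for n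
  proof -
    consider "n = 0" | "n = 1" | m where "n = m + 2"
      by (metis One_nat_def add_2_eq_Suc' not0_implies_Suc)
    then show ?thesis
      by cases (use rec1 rec2 rec in \<open>auto simp: e_def d_def[abs_def] numeral_2_eq_2 numeral_3_eq_3\<close>)
  qed
  have shift: "(\<Sum>n\<le>K + 3. f n) = f 0 + (\<Sum>n\<le>K + 2. f (Suc n))" for f :: "nat \<Rightarrow> real"
  proof -
    have "K + 3 = Suc (K + 2)"
      by simp
    then show ?thesis
      by (simp only: sum.atMost_Suc_shift)
  qed
  define P Q R D where "P = (\<Sum>i\<le>K. p i)" and "Q = (\<Sum>i\<le>K. q (i + 1))" and "R = (\<Sum>i\<le>K. r (i + 2))"
    and "D = (\<Sum>i\<le>K. d i)"
  have "P \<le> (\<Sum>n\<le>K + 2. p n)"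
    unfolding P_def using p by (intro sum_mono2) auto
  moreover have "Q \<le> (\<Sum>n\<le>K + 1. q n)" "(\<Sum>n\<le>K + 1. q n) \<le> (\<Sum>n\<le>K + 3. q n)"
    unfolding Q_def using q by (intro sum_atMost_shift_le sum_mono2; auto)+
  moreover have "R \<le> (\<Sum>n\<le>K + 2. r n)"
    unfolding R_def using r by (intro sum_atMost_shift_le)
  ultimately have upper: "P \<le> \<alpha>" "Q \<le> \<gamma>" "R \<le> \<xi>"
    using \<alpha> \<gamma> \<xi> by linarith+
  have lower: "0 \<le> P" "0 \<le> Q" "0 \<le> R"
    unfolding P_def Q_def R_def using p q r by (auto intro: sum_nonneg)
  have "D = \<rho> * P + Q"
    unfolding D_def d_def P_def Q_def by (simp add: sum.distrib sum_distrib_left)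
  then have D: "0 \<le> D" "D \<le> \<rho> * \<alpha> + \<gamma>"
    using upper lower \<rho> by (auto intro: add_mono mult_left_mono)
  have "(\<Sum>n\<le>K + 2. e (Suc n)) = \<rho> * (\<Sum>m\<le>K. \<Sum>l\<le>m. \<Sum>k\<le>m-l. two_neighbour_terms p d q r l k (m - l - k))"
    by (subst sum_atMost_shift_eq[of 2 "\<lambda>n. e (Suc n)"]) (auto simp: e_def less_2_cases_iff sum_distrib_left)
  also have "\<dots> \<le> \<rho> * (D * P * D + D * Q * P + P * Q * D + P * R * P)"
    unfolding P_def Q_def R_def D_def using p q r d \<rho> by (intro mult_left_mono two_neighbour_terms_sum_le) auto
  also have "\<dots> \<le> \<rho> * ((\<rho> * \<alpha> + \<gamma>) * \<alpha> * (\<rho> * \<alpha> + \<gamma>)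
      + (\<rho> * \<alpha> + \<gamma>) * \<gamma> * \<alpha> + \<alpha> * \<gamma> * (\<rho> * \<alpha> + \<gamma>) + \<alpha> * \<xi> * \<alpha>)"
    using upper lower D \<rho> by (intro mult_left_mono add_mono mult_mono) (auto intro: mult_nonneg_nonneg)
  finally have "(\<Sum>n\<le>K + 2. e (Suc n)) \<le> \<dots>" .
  moreover have "(\<Sum>n\<le>K + 3. p n) \<le> p 0 + \<rho> * (\<Sum>n\<le>K + 2. p n) + (\<Sum>n\<le>K + 2. q (Suc n))
      + (\<Sum>n\<le>K + 2. e (Suc n))"
  proof -
    have "(\<Sum>n\<le>K + 2. p (Suc n)) \<le> (\<Sum>n\<le>K + 2. \<rho> * p n + q (Suc n) + e (Suc n))"
      by (rule sum_mono) (rule step)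
    then show ?thesis
      using shift[of p] by (simp only: sum.distrib sum_distrib_left[symmetric])
  qed
  moreover have "(\<Sum>n\<le>K + 2. q (Suc n)) \<le> \<gamma>"
    using shift[of q] q[of 0] \<gamma> by linarith
  moreover have "\<rho> * (\<Sum>n\<le>K + 2. p n) \<le> \<rho> * \<alpha>"
    using \<alpha> \<rho> by (rule mult_left_mono)
  ultimately show ?thesis
    using p_start by linarith
qed

text \<open>The sums are partial sums of the generating functions of \<open>p\<close>, \<open>q\<close>, \<open>r\<close>; the hypotheses
  \<open>fix_p\<close>, \<open>fix_q\<close>, \<open>fix_r\<close> say that \<open>(\<alpha>, \<gamma>, \<xi>)\<close> is a post-fixed point of the recurrences,
  so induction keeps all partial sums below it.\<close>
lemma partial_sums_bounded:
  fixes p q r :: "nat \<Rightarrow> real"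
  assumes p: "\<And>n. 0 \<le> p n" and q: "\<And>n. 0 \<le> q n" and r: "\<And>n. 0 \<le> r n" and \<rho>: "0 \<le> \<rho>"
    and p_start: "p 0 \<le> 1" and q_start: "q 0 = 0" "q 1 = 0" and r_start: "r 0 = 0" "r 1 = 0" "r 2 = 0"
    and rec_q: "\<And>m. q (m + 2) \<le> \<rho> * (\<Sum>i\<le>m. q (i + 1) * p (m - i) + p i * (\<rho> * p (m - i) + q (m - i + 1)))"
    and rec_r: "\<And>m. r (m + 3) \<le> \<rho> * (\<Sum>l\<le>m. q (l + 1) * q (m - l + 1) + p l * (r (m - l + 2) + \<rho> * q (m - l + 1)))"
    and rec_p1: "p 1 \<le> \<rho> * p 0 + q 1" and rec_p2: "p 2 \<le> \<rho> * p 1 + q 2"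
    and rec_p: "\<And>m. p (m + 3) \<le> \<rho> * p (m + 2) + q (m + 3)
       + \<rho> * (\<Sum>l\<le>m. \<Sum>k\<le>m-l. two_neighbour_terms p (\<lambda>i. \<rho> * p i + q (i + 1)) q r l k (m - l - k))"
    and \<alpha>: "0 \<le> \<alpha>" and \<gamma>: "0 \<le> \<gamma>" and \<xi>: "0 \<le> \<xi>"
    and fix_q: "\<rho> * (\<gamma> * \<alpha> + \<alpha> * (\<rho> * \<alpha> + \<gamma>)) \<le> \<gamma>"
    and fix_r: "\<rho> * (\<gamma> * \<gamma> + \<alpha> * (\<xi> + \<rho> * \<gamma>)) \<le> \<xi>"
    and fix_p: "1 + \<rho> * \<alpha> + \<gamma> + \<rho> * ((\<rho> * \<alpha> + \<gamma>) * \<alpha> * (\<rho> * \<alpha> + \<gamma>)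
       + (\<rho> * \<alpha> + \<gamma>) * \<gamma> * \<alpha> + \<alpha> * \<gamma> * (\<rho> * \<alpha> + \<gamma>) + \<alpha> * \<xi> * \<alpha>) \<le> \<alpha>"
  shows "(\<Sum>n\<le>N. p n) \<le> \<alpha>"
proof -
  have "0 \<le> \<rho> * ((\<rho> * \<alpha> + \<gamma>) * \<alpha> * (\<rho> * \<alpha> + \<gamma>)
     + (\<rho> * \<alpha> + \<gamma>) * \<gamma> * \<alpha> + \<alpha> * \<gamma> * (\<rho> * \<alpha> + \<gamma>) + \<alpha> * \<xi> * \<alpha>)"
    using \<alpha> \<gamma> \<xi> \<rho> by (intro mult_nonneg_nonneg add_nonneg_nonneg) auto
  then have fix_p1: "1 + \<rho> * \<alpha> + \<gamma> \<le> \<alpha>"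
    using fix_p by linarith
  have "(\<Sum>n\<le>N. p n) \<le> \<alpha> \<and> (\<Sum>n\<le>N. q n) \<le> \<gamma> \<and> (\<Sum>n\<le>N. r n) \<le> \<xi>"
  proof (induction N rule: less_induct)
    case (less N)
    have bound_q: "(\<Sum>n\<le>N. q n) \<le> \<gamma>"
    proof (cases "N < 2")
      case False
      then obtain M where "N = M + 2"
        by (metis add.commute le_Suc_ex not_less)
      then show ?thesis
        using leaf_partial_sum_step[OF p q \<rho> q_start rec_q] less[of M] less[of "M + 1"] fix_q by force
    qed (use q_start \<gamma> in \<open>auto simp: less_2_cases_iff\<close>)
    have bound_r: "(\<Sum>n\<le>N. r n) \<le> \<xi>"
    proof (cases "N < 3")
      case False
      then obtain M where "N = M + 3"
        by (metis add.commute le_Suc_ex not_less)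
      then show ?thesis
        using apart_partial_sum_step[OF p q r \<rho> r_start rec_r] less[of M] less[of "M + 1"] less[of "M + 2"] fix_r
        by force
    qed (use r_start \<xi> in \<open>auto simp: less_Suc_eq numeral_3_eq_3 numeral_2_eq_2\<close>)
    have small: "(\<Sum>n\<le>N. p n) \<le> \<alpha>" if "N = 1 \<or> N = 2"
    proof -
      have "(\<Sum>n\<le>N. p n) \<le> 1 + \<rho> * (\<Sum>n\<le>N - 1. p n) + (\<Sum>n\<le>N. q n)"
        using that p_start q_start rec_p1 rec_p2 by (auto simp: numeral_2_eq_2 algebra_simps)
      also have "\<dots> \<le> 1 + \<rho> * \<alpha> + \<gamma>"
        using less[of "N - 1"] bound_q that \<rho> by (intro add_mono mult_left_mono) auto
      finally show ?thesis
        using fix_p1 by linarith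
    qed
    have "N = 0 \<or> N = 1 \<or> N = 2 \<or> (\<exists>K. N = K + 3)"
      by presburger
    then have bound_p: "(\<Sum>n\<le>N. p n) \<le> \<alpha>"
    proof (elim disjE exE)
      assume "N = 0"
      then show ?thesis
        using p_start fix_p1 mult_nonneg_nonneg[OF \<rho> \<alpha>] \<gamma> by simp
    next
      fix K assume "N = K + 3"
      then show ?thesis
        using ncps_partial_sum_step[OF p q r \<rho> p_start rec_p1 rec_p2 rec_p] less[of "K + 2"] bound_q fix_p
        by force
    qed (use small in force)+
    show ?case
      using bound_p bound_q bound_r by blast
  qed
  then show ?thesis
    by blast
qed

lemma scaled_leaf_recurrence:
  fixes a g :: "nat \<Rightarrow> nat" and \<rho> :: real
  assumes rec: "g (m + 2) \<le> (\<Sum>i\<le>m. g (i + 1) * a (m - i) + a i * (a (m - i) + g (m - i + 1)))"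
    and \<rho>: "0 \<le> \<rho>"
  defines "p \<equiv> \<lambda>n. real (a n) * \<rho> ^ n" and "q \<equiv> \<lambda>n. real (g n) * \<rho> ^ n"
  shows "q (m + 2) \<le> \<rho> * (\<Sum>i\<le>m. q (i + 1) * p (m - i) + p i * (\<rho> * p (m - i) + q (m - i + 1)))"
proof -
  have "q (m + 2) \<le> real (\<Sum>i\<le>m. g (i + 1) * a (m - i) + a i * (a (m - i) + g (m - i + 1))) * \<rho> ^ (m + 2)"
    unfolding q_def using rec \<rho> by (intro mult_right_mono) (simp_all only: of_nat_le_iff, simp)
  also have "\<dots> = \<rho> * (\<Sum>i\<le>m. q (i + 1) * p (m - i) + p i * (\<rho> * p (m - i) + q (m - i + 1)))"
    unfolding of_nat_sum sum_distrib_left sum_distrib_right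
  proof (rule sum.cong[OF refl])
    fix i assume "i \<in> {..m}"
    then have e: "\<rho> ^ (m + 2) = \<rho> * \<rho> * (\<rho> ^ i * \<rho> ^ (m - i))"
      by (simp add: power_add[symmetric])
    show "real (g (i + 1) * a (m - i) + a i * (a (m - i) + g (m - i + 1))) * \<rho> ^ (m + 2)
        = \<rho> * (q (i + 1) * p (m - i) + p i * (\<rho> * p (m - i) + q (m - i + 1)))"
      unfolding p_def q_def e by (simp add: algebra_simps)
  qed
  finally show ?thesis .
qed

lemma scaled_apart_recurrence:
  fixes a g x :: "nat \<Rightarrow> nat" and \<rho> :: real
  assumes rec: "x (m + 3) \<le> (\<Sum>l\<le>m. g (l + 1) * g (m - l + 1) + a l * (x (m - l + 2) + g (m - l + 1)))"
    and \<rho>: "0 \<le> \<rho>"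
  defines "p \<equiv> \<lambda>n. real (a n) * \<rho> ^ n" and "q \<equiv> \<lambda>n. real (g n) * \<rho> ^ n"
    and "r \<equiv> \<lambda>n. real (x n) * \<rho> ^ n"
  shows "r (m + 3) \<le> \<rho> * (\<Sum>l\<le>m. q (l + 1) * q (m - l + 1) + p l * (r (m - l + 2) + \<rho> * q (m - l + 1)))"
proof -
  have "r (m + 3) \<le> real (\<Sum>l\<le>m. g (l + 1) * g (m - l + 1) + a l * (x (m - l + 2) + g (m - l + 1))) * \<rho> ^ (m + 3)"
    unfolding r_def using rec \<rho> by (intro mult_right_mono) (simp_all only: of_nat_le_iff, simp)
  also have "\<dots> = \<rho> * (\<Sum>l\<le>m. q (l + 1) * q (m - l + 1) + p l * (r (m - l + 2) + \<rho> * q (m - l + 1)))"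
    unfolding of_nat_sum sum_distrib_left sum_distrib_right
  proof (rule sum.cong[OF refl])
    fix l assume "l \<in> {..m}"
    then have e: "\<rho> ^ (m + 3) = \<rho> * \<rho> * \<rho> * (\<rho> ^ l * \<rho> ^ (m - l))"
      by (simp add: power_add[symmetric] numeral_3_eq_3)
    show "real (g (l + 1) * g (m - l + 1) + a l * (x (m - l + 2) + g (m - l + 1))) * \<rho> ^ (m + 3)
        = \<rho> * (q (l + 1) * q (m - l + 1) + p l * (r (m - l + 2) + \<rho> * q (m - l + 1)))"
      unfolding p_def q_def r_def e by (simp add: algebra_simps)
  qed
  finally show ?thesis .
qed

lemma scaled_ncps_recurrence:
  fixes a g x :: "nat \<Rightarrow> nat" and \<rho> :: real
  assumes rec: "a (m + 3) \<le> a (m + 2) + g (m + 3)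
      + (\<Sum>l\<le>m. \<Sum>k\<le>m-l. two_neighbour_terms a (\<lambda>i. a i + g (i + 1)) g x l k (m - l - k))"
    and \<rho>: "0 \<le> \<rho>"
  defines "p \<equiv> \<lambda>n. real (a n) * \<rho> ^ n" and "q \<equiv> \<lambda>n. real (g n) * \<rho> ^ n"
    and "r \<equiv> \<lambda>n. real (x n) * \<rho> ^ n"
  shows "p (m + 3) \<le> \<rho> * p (m + 2) + q (m + 3)
      + \<rho> * (\<Sum>l\<le>m. \<Sum>k\<le>m-l. two_neighbour_terms p (\<lambda>i. \<rho> * p i + q (i + 1)) q r l k (m - l - k))"
proof -
  have "p (m + 3) \<le> real (a (m + 2) + g (m + 3)
      + (\<Sum>l\<le>m. \<Sum>k\<le>m-l. two_neighbour_terms a (\<lambda>i. a i + g (i + 1)) g x l k (m - l - k))) * \<rho> ^ (m + 3)"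
    unfolding p_def using rec \<rho> by (intro mult_right_mono) (simp_all only: of_nat_le_iff, simp)
  also have "\<dots> = \<rho> * p (m + 2) + q (m + 3)
      + \<rho> * (\<Sum>l\<le>m. \<Sum>k\<le>m-l. two_neighbour_terms p (\<lambda>i. \<rho> * p i + q (i + 1)) q r l k (m - l - k))"
  proof -
    have "real (a (m + 2)) * \<rho> ^ (m + 3) = \<rho> * p (m + 2)"
      unfolding p_def by (simp add: numeral_3_eq_3 numeral_2_eq_2)
    moreover have "real (\<Sum>l\<le>m. \<Sum>k\<le>m-l. two_neighbour_terms a (\<lambda>i. a i + g (i + 1)) g x l k (m - l - k)) * \<rho> ^ (m + 3)
        = \<rho> * (\<Sum>l\<le>m. \<Sum>k\<le>m-l. two_neighbour_terms p (\<lambda>i. \<rho> * p i + q (i + 1)) q r l k (m - l - k))"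
      unfolding of_nat_sum sum_distrib_left sum_distrib_right
    proof (intro sum.cong refl)
      fix l k assume "l \<in> {..m}" "k \<in> {..m-l}"
      then have e: "\<rho> ^ (m + 3) = \<rho> * \<rho> * \<rho> * (\<rho> ^ l * \<rho> ^ k * \<rho> ^ (m - l - k))"
        by (simp add: power_add[symmetric] numeral_3_eq_3)
      show "real (two_neighbour_terms a (\<lambda>i. a i + g (i + 1)) g x l k (m - l - k)) * \<rho> ^ (m + 3)
          = \<rho> * two_neighbour_terms p (\<lambda>i. \<rho> * p i + q (i + 1)) q r l k (m - l - k)"
        unfolding p_def q_def r_def two_neighbour_terms_def e by (simp add: algebra_simps)
    qed
    ultimately show ?thesis
      unfolding q_def of_nat_add distrib_right by simp
  qed
  finally show ?thesis .
qed

lemma growth_bound_from_recurrences: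
  fixes a g x :: "nat \<Rightarrow> nat"
  assumes a_start: "a 0 \<le> 1" "a 1 \<le> a 0 + g 1" "a 2 \<le> a 1 + g 2"
    and a_rec: "\<And>m. a (m + 3) \<le> a (m + 2) + g (m + 3)
      + (\<Sum>l\<le>m. \<Sum>k\<le>m-l. two_neighbour_terms a (\<lambda>i. a i + g (i + 1)) g x l k (m - l - k))"
    and g_start: "g 0 = 0" "g 1 = 0"
    and g_rec: "\<And>m. g (m + 2) \<le> (\<Sum>i\<le>m. g (i + 1) * a (m - i) + a i * (a (m - i) + g (m - i + 1)))"
    and x_start: "x 0 = 0" "x 1 = 0" "x 2 = 0"
    and x_rec: "\<And>m. x (m + 3) \<le> (\<Sum>l\<le>m. g (l + 1) * g (m - l + 1) + a l * (x (m - l + 2) + g (m - l + 1)))"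
  shows "real (a n) \<le> 1.59333 * 5.610718614 ^ n"
proof -
  define \<rho> \<alpha> \<gamma> \<xi> :: real
    where "\<rho> = 1 / 5.610718614" and "\<alpha> = 1.59333"
      and "\<gamma> = 0.18665939807552" and "\<xi> = 0.02186724086656"
  have \<rho>: "0 \<le> \<rho>"
    unfolding \<rho>_def by simp
  have "(\<Sum>i\<le>n. real (a i) * \<rho> ^ i) \<le> \<alpha>"
  proof (rule partial_sums_bounded[where q = "\<lambda>n. real (g n) * \<rho> ^ n" and r = "\<lambda>n. real (x n) * \<rho> ^ n"
        and \<rho> = \<rho> and \<gamma> = \<gamma> and \<xi> = \<xi>])
    show "real (a 1) * \<rho> ^ 1 \<le> \<rho> * (real (a 0) * \<rho> ^ 0) + real (g 1) * \<rho> ^ 1"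
    proof -
      have "real (a 1) \<le> real (a 0) + real (g 1)"
        using a_start(2) by (simp only: of_nat_add[symmetric] of_nat_le_iff)
      then have "real (a 1) * \<rho> \<le> (real (a 0) + real (g 1)) * \<rho>"
        using \<rho> by (rule mult_right_mono)
      then show ?thesis
        by (simp add: algebra_simps)
    qed
    show "real (a 2) * \<rho> ^ 2 \<le> \<rho> * (real (a 1) * \<rho> ^ 1) + real (g 2) * \<rho> ^ 2"
    proof -
      have "real (a 2) \<le> real (a 1) + real (g 2)"
        using a_start(3) by (simp only: of_nat_add[symmetric] of_nat_le_iff)
      then have "real (a 2) * \<rho> ^ 2 \<le> (real (a 1) + real (g 2)) * \<rho> ^ 2"
        using \<rho> by (simp add: mult_right_mono)
      then show ?thesis
        by (simp add: algebra_simps power2_eq_square)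
    qed
    show "\<rho> * (\<gamma> * \<alpha> + \<alpha> * (\<rho> * \<alpha> + \<gamma>)) \<le> \<gamma>"
      and "\<rho> * (\<gamma> * \<gamma> + \<alpha> * (\<xi> + \<rho> * \<gamma>)) \<le> \<xi>"
      and "1 + \<rho> * \<alpha> + \<gamma> + \<rho> * ((\<rho> * \<alpha> + \<gamma>) * \<alpha> * (\<rho> * \<alpha> + \<gamma>)
        + (\<rho> * \<alpha> + \<gamma>) * \<gamma> * \<alpha> + \<alpha> * \<gamma> * (\<rho> * \<alpha> + \<gamma>) + \<alpha> * \<xi> * \<alpha>) \<le> \<alpha>"
      unfolding \<rho>_def \<alpha>_def \<gamma>_def \<xi>_def by simp_all
  qed (fact scaled_leaf_recurrence[OF g_rec \<rho>] scaled_apart_recurrence[OF x_rec \<rho>] scaled_ncps_recurrence[OF a_rec \<rho>]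
      | use \<rho> a_start g_start x_start in \<open>simp add: \<alpha>_def \<gamma>_def \<xi>_def\<close>)+
  then have "real (a n) * \<rho> ^ n \<le> \<alpha>"
    using member_le_sum[of n "{..n}" "\<lambda>i. real (a i) * \<rho> ^ i"] \<rho> by simp
  then show ?thesis
    unfolding \<rho>_def \<alpha>_def by (simp add: field_simps)
qed

section \<open>Degrees, forests and paths in edge sets\<close>

definition edge_deg :: "'a set set \<Rightarrow> 'a \<Rightarrow> nat" where
  "edge_deg F v = card {e\<in>F. v \<in> e}"

text \<open>For finite edge sets this excludes cycles: a nonempty edge set without vertices of degree 1
  contains one.\<close>
definition forest :: "'a set set \<Rightarrow> bool" where
  "forest F \<longleftrightarrow> (\<forall>F'\<subseteq>F. (\<forall>v. edge_deg F' v \<noteq> 1) \<longrightarrow> F' = {})"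

text \<open>In a forest of maximum degree 2 this says that \<open>F\<close> contains a path from \<open>a\<close> to \<open>b\<close>.\<close>
definition linked :: "'a set set \<Rightarrow> 'a \<Rightarrow> 'a \<Rightarrow> bool" where
  "linked F a b \<longleftrightarrow>
     (\<exists>F'\<subseteq>F. edge_deg F' a = 1 \<and> edge_deg F' b = 1 \<and> (\<forall>v. v \<noteq> a \<longrightarrow> v \<noteq> b \<longrightarrow> edge_deg F' v \<noteq> 1))"

definition edges_within :: "'a set set \<Rightarrow> 'a set \<Rightarrow> 'a set set" where
  "edges_within F W = {e\<in>F. e \<subseteq> W}"

definition map_edges :: "('a \<Rightarrow> 'b) \<Rightarrow> 'a set set \<Rightarrow> 'b set set" where
  "map_edges \<phi> F = image \<phi> ` F"

lemma edge_deg_empty [simp]: "edge_deg {} v = 0"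
  by (simp add: edge_deg_def)

lemma edge_deg_singleton: "edge_deg {e} v = (if v \<in> e then 1 else 0)"
  by (simp add: edge_deg_def Collect_conv_if)

lemma edge_deg_mono: "finite F \<Longrightarrow> G \<subseteq> F \<Longrightarrow> edge_deg G v \<le> edge_deg F v"
  unfolding edge_deg_def by (rule card_mono) auto

lemma edge_deg_union:
  assumes "finite F" "finite G" "F \<inter> G = {}"
  shows "edge_deg (F \<union> G) v = edge_deg F v + edge_deg G v"
proof -
  have "{e\<in>F \<union> G. v \<in> e} = {e\<in>F. v \<in> e} \<union> {e\<in>G. v \<in> e}"
    by blast
  then show ?thesis
    unfolding edge_deg_def using assms by (simp add: card_Un_disjoint disjoint_iff)
qed

lemma edge_deg_insert:
  assumes "finite F" "e \<notin> F"
  shows "edge_deg (insert e F) v = edge_deg F v + (if v \<in> e then 1 else 0)"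
  using edge_deg_union[of "{e}" F v] assms by (simp add: edge_deg_singleton)

lemma edge_deg_eq_0_iff: "finite F \<Longrightarrow> edge_deg F v = 0 \<longleftrightarrow> (\<forall>e\<in>F. v \<notin> e)"
  unfolding edge_deg_def by auto

lemma edge_deg_eq_1_unique:
  assumes "edge_deg F v = 1" "e \<in> F" "e' \<in> F" "v \<in> e" "v \<in> e'"
  shows "e = e'"
proof -
  obtain x where "{e\<in>F. v \<in> e} = {x}"
    using assms(1) card_1_singletonE unfolding edge_deg_def by blast
  moreover have "e \<in> {e\<in>F. v \<in> e}" "e' \<in> {e\<in>F. v \<in> e}"
    using assms(2-5) by simp_all
  ultimately show ?thesis
    by simp
qed

lemma edge_deg_edges_within_outside: "v \<notin> W \<Longrightarrow> edge_deg (edges_within F W) v = 0"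
  unfolding edge_deg_def edges_within_def by (auto simp: card_eq_0_iff)

lemma edge_deg_map_edges:
  assumes "inj_on \<phi> V" "F \<subseteq> Pow V" "v \<in> V"
  shows "edge_deg (map_edges \<phi> F) (\<phi> v) = edge_deg F v"
proof -
  have "{e'\<in>map_edges \<phi> F. \<phi> v \<in> e'} = image \<phi> ` {e\<in>F. v \<in> e}"
  proof (intro equalityI subsetI)
    fix e' assume "e' \<in> {e'\<in>map_edges \<phi> F. \<phi> v \<in> e'}"
    then obtain e where e: "e \<in> F" "e' = \<phi> ` e" "\<phi> v \<in> \<phi> ` e"
      unfolding map_edges_def by blast
    then have "v \<in> e"
      using assms inj_on_image_mem_iff[of \<phi> V v e] by blast
    then show "e' \<in> image \<phi> ` {e\<in>F. v \<in> e}"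
      using e by blast
  qed (auto simp: map_edges_def)
  moreover have "inj_on (image \<phi>) {e\<in>F. v \<in> e}"
    using assms by (blast intro: inj_on_subset[OF inj_on_image_Pow])
  ultimately show ?thesis
    unfolding edge_deg_def by (simp add: card_image)
qed

lemma edge_deg_outside: "F \<subseteq> Pow V \<Longrightarrow> w \<notin> V \<Longrightarrow> edge_deg F w = 0"
  unfolding edge_deg_def by (auto simp: card_eq_0_iff)

lemma edge_deg_map_edges_outside: "F \<subseteq> Pow V \<Longrightarrow> w \<notin> \<phi> ` V \<Longrightarrow> edge_deg (map_edges \<phi> F) w = 0"
  by (rule edge_deg_outside[where V = "\<phi> ` V"]) (auto simp: map_edges_def)

lemma edge_deg_map_edges_le:
  assumes "inj_on \<phi> V" "F \<subseteq> Pow V" "\<And>v. edge_deg F v \<le> k"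
  shows "edge_deg (map_edges \<phi> F) w \<le> k"
proof (cases "w \<in> \<phi> ` V")
  case True
  then obtain v where "v \<in> V" "w = \<phi> v"
    by blast
  then show ?thesis
    using edge_deg_map_edges[OF assms(1,2)] assms(3) by simp
qed (simp add: edge_deg_map_edges_outside[OF assms(2)])

lemma map_edges_ordered_pair:
  fixes \<phi> :: "'a \<Rightarrow> 'b::linorder"
  assumes "inj_on \<phi> V" "\<And>e. e \<in> F \<Longrightarrow> \<exists>x y. x \<in> V \<and> y \<in> V \<and> x \<noteq> y \<and> e = {x, y}" "e \<in> map_edges \<phi> F"
  shows "\<exists>a b. a \<in> \<phi> ` V \<and> b \<in> \<phi> ` V \<and> a < b \<and> e = {a, b}"
proof -
  obtain x y where xy: "x \<in> V" "y \<in> V" "x \<noteq> y" "e = {\<phi> x, \<phi> y}"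
    using assms(2,3) unfolding map_edges_def by force
  then have "\<phi> x \<noteq> \<phi> y"
    using assms(1) by (auto simp: inj_on_eq_iff)
  then consider "\<phi> x < \<phi> y" | "\<phi> y < \<phi> x"
    by (meson linorder_neqE)
  then show ?thesis
    using xy by cases (blast, metis image_eqI insert_commute)
qed

lemma forest_mono: "forest F \<Longrightarrow> G \<subseteq> F \<Longrightarrow> forest G"
  unfolding forest_def by (meson order_trans)

lemma map_edges_subset_image:
  assumes "F'' \<subseteq> map_edges \<phi> F"
  obtains F' where "F' \<subseteq> F" "map_edges \<phi> F' = F''"
  using assms unfolding map_edges_def by (metis subset_image_iff)

lemma forest_map_edges_iff:
  assumes "inj_on \<phi> V" "F \<subseteq> Pow V"
  shows "forest (map_edges \<phi> F) \<longleftrightarrow> forest F"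
proof -
  have deg: "(\<forall>w. edge_deg (map_edges \<phi> F') w \<noteq> 1) \<longleftrightarrow> (\<forall>v. edge_deg F' v \<noteq> 1)" if "F' \<subseteq> F" for F'
  proof -
    have F': "F' \<subseteq> Pow V"
      using that assms(2) by blast
    have "edge_deg (map_edges \<phi> F') w \<noteq> 1" if "\<forall>v. edge_deg F' v \<noteq> 1" for w
      using that edge_deg_map_edges[OF assms(1) F'] edge_deg_map_edges_outside[OF F', of w]
      by (cases "w \<in> \<phi> ` V") auto
    moreover have "edge_deg F' v \<noteq> 1" if "\<forall>w. edge_deg (map_edges \<phi> F') w \<noteq> 1" for v
    proof (cases "v \<in> V")
      case True
      then show ?thesis
        using that edge_deg_map_edges[OF assms(1) F' True] by metis
    qed (simp add: edge_deg_outside[OF F'])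
    ultimately show ?thesis
      by blast
  qed
  show ?thesis
  proof
    assume "forest (map_edges \<phi> F)"
    then show "forest F"
      unfolding forest_def using deg by (metis image_mono map_edges_def image_is_empty)
  next
    assume "forest F"
    then show "forest (map_edges \<phi> F)"
      unfolding forest_def using deg
      by (metis map_edges_subset_image map_edges_def image_empty)
  qed
qed

lemma linked_map_edges:
  assumes "inj_on \<phi> V" "F \<subseteq> Pow V" "a \<in> V" "b \<in> V"
    and "linked (map_edges \<phi> F) (\<phi> a) (\<phi> b)"
  shows "linked F a b"
proof -
  obtain F'' where F'': "F'' \<subseteq> map_edges \<phi> F" "edge_deg F'' (\<phi> a) = 1" "edge_deg F'' (\<phi> b) = 1"
    "\<And>w. w \<noteq> \<phi> a \<Longrightarrow> w \<noteq> \<phi> b \<Longrightarrow> edge_deg F'' w \<noteq> 1"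
    using assms(5) unfolding linked_def by blast
  obtain F' where F': "F' \<subseteq> F" "map_edges \<phi> F' = F''"
    using map_edges_subset_image[OF F''(1)] .
  have F'_Pow: "F' \<subseteq> Pow V"
    using F'(1) assms(2) by blast
  have deg: "edge_deg F' v = edge_deg F'' (\<phi> v)" if "v \<in> V" for v
    using edge_deg_map_edges[OF assms(1) F'_Pow that] F'(2) by simp
  have "edge_deg F' v \<noteq> 1" if "v \<noteq> a" "v \<noteq> b" for v
  proof (cases "v \<in> V")
    case True
    then have "\<phi> v \<noteq> \<phi> a" "\<phi> v \<noteq> \<phi> b"
      using that assms(1,3,4) by (metis inj_onD)+
    then show ?thesis
      using F''(4) deg[OF True] by simp
  qed (simp add: edge_deg_outside[OF F'_Pow])
  then show ?thesis
    unfolding linked_def using F'(1) deg assms(3,4) F''(2,3) by auto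
qed

lemma linked_edge: "{a, b} \<in> F \<Longrightarrow> a \<noteq> b \<Longrightarrow> linked F a b"
  unfolding linked_def by (intro exI[of _ "{{a, b}}"]) (auto simp: edge_deg_singleton)

lemma linked_extend:
  assumes F: "finite F" and am: "{a, m} \<in> F" and Q: "Q \<subseteq> F" "{a, m} \<notin> Q" "edge_deg Q a = 0"
    and linked: "linked Q m b" and distinct: "b \<noteq> a" "b \<noteq> m" "a \<noteq> m"
  shows "linked F a b"
proof -
  obtain P where P: "P \<subseteq> Q" "edge_deg P m = 1" "edge_deg P b = 1"
    "\<And>v. v \<noteq> m \<Longrightarrow> v \<noteq> b \<Longrightarrow> edge_deg P v \<noteq> 1"
    using linked unfolding linked_def by blast
  have "finite P"
    using P(1) Q(1) F by (meson finite_subset)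
  then have deg: "edge_deg (insert {a, m} P) v = edge_deg P v + (if v \<in> {a, m} then 1 else 0)" for v
    using P(1) Q(2) by (intro edge_deg_insert) auto
  have "edge_deg P a = 0"
    using edge_deg_mono[of Q P a] P(1) Q(1,3) F by (metis finite_subset le_zero_eq)
  then show ?thesis
    unfolding linked_def using P Q(1) am distinct
    by (intro exI[of _ "insert {a, m} P"]) (auto simp: deg)
qed

text \<open>A path from \<open>a\<close> to \<open>b\<close> together with the edge \<open>{a, b}\<close> is a cycle.\<close>
lemma linked_edge_not_forest:
  assumes F: "finite F" and linked: "linked Q a b" and Q: "Q \<subseteq> F" "{a, b} \<notin> Q"
    and ab: "{a, b} \<in> F" "a \<noteq> b"
  shows "\<not> forest F"
proof
  assume forest: "forest F"
  obtain P where P: "P \<subseteq> Q" "edge_deg P a = 1" "edge_deg P b = 1"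
    "\<And>v. v \<noteq> a \<Longrightarrow> v \<noteq> b \<Longrightarrow> edge_deg P v \<noteq> 1"
    using linked unfolding linked_def by blast
  have "finite P"
    using P(1) Q(1) F by (meson finite_subset)
  then have "edge_deg (insert {a, b} P) v = edge_deg P v + (if v \<in> {a, b} then 1 else 0)" for v
    using P(1) Q(2) by (intro edge_deg_insert) auto
  then have "edge_deg (insert {a, b} P) v \<noteq> 1" for v
    using P(2-4) by (cases "v = a \<or> v = b") auto
  moreover have "insert {a, b} P \<subseteq> F"
    using P(1) Q(1) ab(1) by blast
  ultimately show False
    using forest unfolding forest_def by blast
qed

lemma edge_deg_pos_obtain:
  assumes "0 < edge_deg F v"
  obtains e where "e \<in> F" "v \<in> e"
  using assms unfolding edge_deg_def by (metis (mono_tags, lifting) Collect_empty_eq card.empty less_irrefl)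

lemma not_linked_neighbours:
  assumes F: "forest F" "finite F" and e: "{a, m1} \<in> F" "{a, m2} \<in> F" and P: "P \<subseteq> F" "edge_deg P a = 0"
    and distinct: "m1 \<noteq> m2" "a \<noteq> m1" "a \<noteq> m2"
  shows "\<not> linked P m1 m2"
proof
  assume "linked P m1 m2"
  have fin: "finite P"
    using P(1) F(2) by (rule finite_subset)
  then have "{a, m1} \<notin> P" "{a, m2} \<notin> P"
    using P(2) by (auto simp: edge_deg_eq_0_iff)
  then have "linked (insert {a, m1} P) a m2"
    using linked_extend[OF _ insertI1 _ _ P(2) \<open>linked P m1 m2\<close>] fin distinct by auto
  moreover have "insert {a, m1} P \<subseteq> F" "{a, m2} \<notin> insert {a, m1} P"
    using e P(1) distinct \<open>{a, m2} \<notin> P\<close> by (auto simp: doubleton_eq_iff)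
  ultimately show False
    using linked_edge_not_forest[OF F(2) _ _ _ e(2)] F(1) distinct by blast
qed

section \<open>Non-crossing path partitions of ordered vertex sets\<close>

text \<open>The combinatorial model of ncp partitions of points in convex position: the points are
  \<open>V \<subseteq> \<nat>\<close> in their cyclic order, so that the chords \<open>{a, c}\<close> and \<open>{b, d}\<close> cross exactly
  when \<open>a < b < c < d\<close>; maximum degree 2 and acyclicity make every component a path.\<close>
definition ncp_on :: "nat set \<Rightarrow> nat set set \<Rightarrow> bool" where
  "ncp_on V F \<longleftrightarrow> (\<forall>e\<in>F. \<exists>a b. a \<in> V \<and> b \<in> V \<and> a < b \<and> e = {a, b})
     \<and> (\<forall>a b c d. a < b \<longrightarrow> b < c \<longrightarrow> c < d \<longrightarrow> {a, c} \<in> F \<longrightarrow> {b, d} \<notin> F)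
     \<and> (\<forall>v. edge_deg F v \<le> 2) \<and> forest F"

definition ncps :: "nat set \<Rightarrow> nat set set set" where
  "ncps V = {F. ncp_on V F}"

definition ncps_first_leaf :: "nat set \<Rightarrow> nat set set set" where
  "ncps_first_leaf V = {F. ncp_on V F \<and> edge_deg F (Min V) = 1}"

definition ncps_last_leaf :: "nat set \<Rightarrow> nat set set set" where
  "ncps_last_leaf V = {F. ncp_on V F \<and> edge_deg F (Max V) = 1}"

definition ncps_ends_apart :: "nat set \<Rightarrow> nat set set set" where
  "ncps_ends_apart V = {F. ncp_on V F \<and> edge_deg F (Min V) = 1 \<and> edge_deg F (Max V) = 1
     \<and> \<not> linked F (Min V) (Max V)}"

lemma ncp_onI:
  assumes "\<And>e. e \<in> F \<Longrightarrow> \<exists>a b. a \<in> V \<and> b \<in> V \<and> a < b \<and> e = {a, b}"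
    and "\<And>a b c d. a < b \<Longrightarrow> b < c \<Longrightarrow> c < d \<Longrightarrow> {a, c} \<in> F \<Longrightarrow> {b, d} \<notin> F"
    and "\<And>v. edge_deg F v \<le> 2" and "forest F"
  shows "ncp_on V F"
  using assms unfolding ncp_on_def by blast

lemma ncp_on_edge: "ncp_on V F \<Longrightarrow> e \<in> F \<Longrightarrow> \<exists>a b. a \<in> V \<and> b \<in> V \<and> a < b \<and> e = {a, b}"
  unfolding ncp_on_def by blast

lemma ncp_on_no_crossing: "ncp_on V F \<Longrightarrow> a < b \<Longrightarrow> b < c \<Longrightarrow> c < d \<Longrightarrow> {a, c} \<in> F \<Longrightarrow> {b, d} \<notin> F"
  unfolding ncp_on_def by blast

lemma ncp_on_edge_deg_le: "ncp_on V F \<Longrightarrow> edge_deg F v \<le> 2"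
  unfolding ncp_on_def by blast

lemma ncp_on_forest: "ncp_on V F \<Longrightarrow> forest F"
  unfolding ncp_on_def by blast

lemma ncp_on_subset_Pow: "ncp_on V F \<Longrightarrow> F \<subseteq> Pow V"
  using ncp_on_edge by blast

lemma ncp_on_finite: "finite V \<Longrightarrow> ncp_on V F \<Longrightarrow> finite F"
  using ncp_on_subset_Pow by (meson finite_Pow_iff finite_subset)

lemma finite_ncps: "finite V \<Longrightarrow> finite (ncps V)"
  unfolding ncps_def using ncp_on_subset_Pow by (blast intro: finite_subset[of _ "Pow (Pow V)"])

lemma finite_ncps_first_leaf: "finite V \<Longrightarrow> finite (ncps_first_leaf V)"
  by (rule finite_subset[OF _ finite_ncps]) (auto simp: ncps_def ncps_first_leaf_def)

lemma finite_ncps_last_leaf: "finite V \<Longrightarrow> finite (ncps_last_leaf V)"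
  by (rule finite_subset[OF _ finite_ncps]) (auto simp: ncps_def ncps_last_leaf_def)

lemma finite_ncps_ends_apart: "finite V \<Longrightarrow> finite (ncps_ends_apart V)"
  by (rule finite_subset[OF _ finite_ncps]) (auto simp: ncps_def ncps_ends_apart_def)

lemma ncp_on_empty: "ncp_on {} F \<Longrightarrow> F = {}"
  using ncp_on_edge by blast

lemma ncp_on_edge_not_singleton: "ncp_on V F \<Longrightarrow> e \<in> F \<Longrightarrow> \<not> e \<subseteq> {x}"
  using ncp_on_edge by fastforce

lemma ncp_on_subset:
  assumes "ncp_on V F" "finite F" "G \<subseteq> F" "\<And>e. e \<in> G \<Longrightarrow> e \<subseteq> W"
  shows "ncp_on W G"
proof (rule ncp_onI)
  fix e assume "e \<in> G"
  then show "\<exists>a b. a \<in> W \<and> b \<in> W \<and> a < b \<and> e = {a, b}"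
    using ncp_on_edge[OF assms(1)] assms(3,4) by blast
next
  show "edge_deg G v \<le> 2" for v
    using ncp_on_edge_deg_le[OF assms(1)] edge_deg_mono[OF assms(2,3)] le_trans by blast
next
  fix a b c d :: nat
  assume "a < b" "b < c" "c < d" "{a, c} \<in> G"
  then show "{b, d} \<notin> G"
    using ncp_on_no_crossing[OF assms(1)] assms(3) by blast
next
  show "forest G"
    using forest_mono[OF ncp_on_forest[OF assms(1)] assms(3)] .
qed

lemma ncp_on_edges_within: "ncp_on V F \<Longrightarrow> finite F \<Longrightarrow> ncp_on W (edges_within F W)"
  by (rule ncp_on_subset) (auto simp: edges_within_def)

lemma ncp_on_remove_isolated:
  assumes "ncp_on V F" "finite F" "edge_deg F v = 0"
  shows "ncp_on (V - {v}) F"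
  using assms ncp_on_subset_Pow[OF assms(1)] by (intro ncp_on_subset[OF assms(1,2)]) (auto simp: edge_deg_eq_0_iff)

section \<open>Invariance under order isomorphisms\<close>

lemma ordered_doubleton_eq: "(x::'a::linorder) < y \<Longrightarrow> u < v \<Longrightarrow> {x, y} = {u, v} \<Longrightarrow> x = u \<and> y = v"
  by (metis doubleton_eq_iff less_asym)

lemma strict_antimono_on_less:
  assumes "strict_antimono_on V (\<phi> :: nat \<Rightarrow> nat)" "x \<in> V" "y \<in> V"
  shows "\<phi> x < \<phi> y \<longleftrightarrow> y < x"
  using assms by (metis linorder_neqE_nat monotone_onD order_less_asym order_less_irrefl)

lemma interleaved_preimage:
  fixes \<phi> :: "nat \<Rightarrow> nat"
  assumes \<phi>: "strict_mono_on V \<phi> \<or> strict_antimono_on V \<phi>" and order: "a < b" "b < c" "c < d"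
    and ac: "a1 \<in> V" "c1 \<in> V" "a1 < c1" "{a, c} = {\<phi> a1, \<phi> c1}"
    and bd: "b1 \<in> V" "d1 \<in> V" "b1 < d1" "{b, d} = {\<phi> b1, \<phi> d1}"
  shows "a1 < b1 \<and> b1 < c1 \<and> c1 < d1 \<or> b1 < a1 \<and> a1 < d1 \<and> d1 < c1"
  using \<phi>
proof
  assume mono: "strict_mono_on V \<phi>"
  then have lt: "\<phi> a1 < \<phi> c1" "\<phi> b1 < \<phi> d1"
    using ac bd strict_mono_on_less[OF mono] by simp_all
  have "a = \<phi> a1 \<and> c = \<phi> c1" "b = \<phi> b1 \<and> d = \<phi> d1"
    using ordered_doubleton_eq[OF _ lt(1) ac(4)] ordered_doubleton_eq[OF _ lt(2) bd(4)] order by simp_all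
  then show ?thesis
    using order ac bd strict_mono_on_less[OF mono] by auto
next
  assume anti: "strict_antimono_on V \<phi>"
  then have lt: "\<phi> c1 < \<phi> a1" "\<phi> d1 < \<phi> b1"
    using ac bd strict_antimono_on_less[OF anti] by simp_all
  have eq: "{a, c} = {\<phi> c1, \<phi> a1}" "{b, d} = {\<phi> d1, \<phi> b1}"
    using ac(4) bd(4) by (simp_all add: insert_commute)
  have "a = \<phi> c1 \<and> c = \<phi> a1" "b = \<phi> d1 \<and> d = \<phi> b1"
    using ordered_doubleton_eq[OF _ lt(1) eq(1)] ordered_doubleton_eq[OF _ lt(2) eq(2)] order by simp_all
  then show ?thesis
    using order ac bd strict_antimono_on_less[OF anti] by auto
qed

lemma ncp_on_map_edges:
  assumes F: "ncp_on V F" and \<phi>: "strict_mono_on V \<phi> \<or> strict_antimono_on V \<phi>"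
  shows "ncp_on (\<phi> ` V) (map_edges \<phi> F)"
proof -
  have inj: "inj_on \<phi> V"
    using \<phi> strict_mono_on_imp_inj_on strict_antimono_iff_antimono by blast
  have FP: "F \<subseteq> Pow V"
    by (rule ncp_on_subset_Pow[OF F])
  have image_edge: "\<exists>a b. a \<in> V \<and> b \<in> V \<and> a < b \<and> {a, b} \<in> F \<and> e' = {\<phi> a, \<phi> b}"
    if "e' \<in> map_edges \<phi> F" for e'
    using that ncp_on_edge[OF F] unfolding map_edges_def by fastforce
  show ?thesis
  proof (rule ncp_onI)
    fix e' assume "e' \<in> map_edges \<phi> F"
    moreover have "\<exists>x y. x \<in> V \<and> y \<in> V \<and> x \<noteq> y \<and> e = {x, y}" if "e \<in> F" for e
      using ncp_on_edge[OF F that] by (blast dest: less_imp_neq)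
    ultimately show "\<exists>a b. a \<in> \<phi> ` V \<and> b \<in> \<phi> ` V \<and> a < b \<and> e' = {a, b}"
      by (rule map_edges_ordered_pair[OF inj, rotated])
  next
    fix a b c d :: nat
    assume order: "a < b" "b < c" "c < d" and ac: "{a, c} \<in> map_edges \<phi> F"
    show "{b, d} \<notin> map_edges \<phi> F"
    proof
      assume "{b, d} \<in> map_edges \<phi> F"
      then obtain b1 d1 where bd: "b1 \<in> V" "d1 \<in> V" "b1 < d1" "{b1, d1} \<in> F" "{b, d} = {\<phi> b1, \<phi> d1}"
        using image_edge by blast
      obtain a1 c1 where ac: "a1 \<in> V" "c1 \<in> V" "a1 < c1" "{a1, c1} \<in> F" "{a, c} = {\<phi> a1, \<phi> c1}"
        using image_edge[OF ac] by blast
      from interleaved_preimage[OF \<phi> order ac(1-3,5) bd(1-3,5)] show False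
        using ncp_on_no_crossing[OF F] ac(4) bd(4) by (metis insert_commute)
    qed
  next
    show "edge_deg (map_edges \<phi> F) w \<le> 2" for w
      using edge_deg_map_edges_le[OF inj FP ncp_on_edge_deg_le[OF F]] .
  next
    show "forest (map_edges \<phi> F)"
      using forest_map_edges_iff[OF inj FP] ncp_on_forest[OF F] by blast
  qed
qed

lemma card_ncps_transport:
  assumes W: "finite W" and \<phi>: "strict_mono_on W \<phi> \<or> strict_antimono_on W \<phi>" and U: "\<phi> ` W = U"
    and PQ: "\<And>F. ncp_on W F \<Longrightarrow> P F \<Longrightarrow> Q (map_edges \<phi> F)"
  shows "card {F. ncp_on W F \<and> P F} \<le> card {F. ncp_on U F \<and> Q F}"
proof (rule card_inj_on_le)
  have "inj_on \<phi> W"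
    using \<phi> strict_mono_on_imp_inj_on strict_antimono_iff_antimono by blast
  then show "inj_on (map_edges \<phi>) {F. ncp_on W F \<and> P F}"
    unfolding map_edges_def using ncp_on_subset_Pow
    by (blast intro: inj_on_subset[OF inj_on_image_Pow[OF inj_on_image_Pow]])
  show "map_edges \<phi> ` {F. ncp_on W F \<and> P F} \<subseteq> {F. ncp_on U F \<and> Q F}"
    using ncp_on_map_edges[OF _ \<phi>] U PQ by blast
  show "finite {F. ncp_on U F \<and> Q F}"
    using finite_ncps[of U] W U unfolding ncps_def by (auto intro: finite_subset)
qed

lemma rank_strict_mono_on: "finite (W :: nat set) \<Longrightarrow> strict_mono_on W (\<lambda>v. card {u\<in>W. u < v})"
proof (intro monotone_onI psubset_card_mono)
  fix x y :: nat assume "finite W" "x \<in> W" "x < y"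
  then show "{u \<in> W. u < x} \<subset> {u \<in> W. u < y}"
    by (blast intro: less_trans elim: less_asym)
qed simp

lemma rev_rank_strict_antimono_on: "finite (W :: nat set) \<Longrightarrow> strict_antimono_on W (\<lambda>v. card {u\<in>W. v < u})"
proof (intro monotone_onI psubset_card_mono)
  fix x y :: nat assume "finite W" "y \<in> W" "x < y"
  then show "{u \<in> W. y < u} \<subset> {u \<in> W. x < u}"
    by (blast intro: less_trans elim: less_asym)
qed simp

lemma image_eq_lessThan_card:
  assumes "finite W" "inj_on \<phi> W" "\<And>v. v \<in> W \<Longrightarrow> \<phi> v < card W"
  shows "\<phi> ` W = {..<card W}"
  using assms by (intro card_subset_eq) (auto simp: card_image)

lemma rank_image: "finite (W :: nat set) \<Longrightarrow> (\<lambda>v. card {u\<in>W. u < v}) ` W = {..<card W}"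
  by (intro image_eq_lessThan_card strict_mono_on_imp_inj_on rank_strict_mono_on psubset_card_mono) auto

lemma rev_rank_image:
  assumes "finite (W :: nat set)"
  shows "(\<lambda>v. card {u\<in>W. v < u}) ` W = {..<card W}"
proof (rule image_eq_lessThan_card[OF assms])
  show "inj_on (\<lambda>v. card {u\<in>W. v < u}) W"
    using rev_rank_strict_antimono_on[OF assms] strict_antimono_iff_antimono by blast
qed (use assms in \<open>auto intro!: psubset_card_mono\<close>)

lemma rank_Min: "finite W \<Longrightarrow> W \<noteq> {} \<Longrightarrow> card {u\<in>W. u < Min W} = 0"
  by (auto simp: card_eq_0_iff)

lemma rev_rank_Max: "finite W \<Longrightarrow> W \<noteq> {} \<Longrightarrow> card {u\<in>W. Max W < u} = 0"
  by (auto simp: card_eq_0_iff)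

lemma rank_Max: "finite W \<Longrightarrow> W \<noteq> {} \<Longrightarrow> card {u\<in>W. u < Max W} = card W - 1"
proof -
  assume "finite W" "W \<noteq> {}"
  then have "{u\<in>W. u < Max W} = W - {Max W}"
    by (auto simp: order.not_eq_order_implies_strict)
  then show ?thesis
    using \<open>finite W\<close> \<open>W \<noteq> {}\<close> by simp
qed

definition num_ncps :: "nat \<Rightarrow> nat" where
  "num_ncps n = card (ncps {..<n})"

definition num_first_leaf :: "nat \<Rightarrow> nat" where
  "num_first_leaf n = card (ncps_first_leaf {..<n})"

definition num_ends_apart :: "nat \<Rightarrow> nat" where
  "num_ends_apart n = card (ncps_ends_apart {..<n})"

lemma Min_lessThan: "0 < n \<Longrightarrow> Min {..<n} = (0::nat)"
  by (rule Min_eqI) auto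

lemma Max_lessThan: "0 < n \<Longrightarrow> Max {..<n} = n - (1::nat)"
  by (rule Max_eqI) auto

lemma ncp_on_leaf_nonempty: "ncp_on W F \<Longrightarrow> edge_deg F v = 1 \<Longrightarrow> W \<noteq> {}"
  using ncp_on_empty by fastforce

lemma card_ncps_le: "finite W \<Longrightarrow> card (ncps W) \<le> num_ncps (card W)"
  unfolding ncps_def num_ncps_def
  using card_ncps_transport[OF _ _ rank_image, of W "\<lambda>_. True" "\<lambda>_. True"] rank_strict_mono_on by simp

lemma card_first_leaf_le:
  assumes W: "finite W"
  shows "card (ncps_first_leaf W) \<le> num_first_leaf (card W)"
proof -
  let ?\<phi> = "\<lambda>v. card {u\<in>W. u < v}"
  have "card {F. ncp_on W F \<and> edge_deg F (Min W) = 1}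
      \<le> card {F. ncp_on {..<card W} F \<and> edge_deg F (Min {..<card W}) = 1}"
  proof (rule card_ncps_transport[OF W _ rank_image[OF W]])
    fix F assume F: "ncp_on W F" "edge_deg F (Min W) = 1"
    then have "W \<noteq> {}"
      by (rule ncp_on_leaf_nonempty)
    then have eq: "Min {..<card W} = ?\<phi> (Min W)"
      using rank_Min[OF W] Min_lessThan[of "card W"] W by (metis card_gt_0_iff)
    have "Min W \<in> W"
      using W \<open>W \<noteq> {}\<close> by simp
    then have "edge_deg (map_edges ?\<phi> F) (?\<phi> (Min W)) = edge_deg F (Min W)"
      by (rule edge_deg_map_edges[OF strict_mono_on_imp_inj_on[OF rank_strict_mono_on[OF W]] ncp_on_subset_Pow[OF F(1)]])
    then show "edge_deg (map_edges ?\<phi> F) (Min {..<card W}) = 1"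
      by (simp only: eq F(2))
  qed (use rank_strict_mono_on[OF W] in auto)
  then show ?thesis
    unfolding ncps_first_leaf_def num_first_leaf_def .
qed

lemma card_last_leaf_le:
  assumes W: "finite W"
  shows "card (ncps_last_leaf W) \<le> num_first_leaf (card W)"
proof -
  let ?\<phi> = "\<lambda>v. card {u\<in>W. v < u}"
  have inj: "inj_on ?\<phi> W"
    using rev_rank_strict_antimono_on[OF W] strict_antimono_iff_antimono by blast
  have "card {F. ncp_on W F \<and> edge_deg F (Max W) = 1}
      \<le> card {F. ncp_on {..<card W} F \<and> edge_deg F (Min {..<card W}) = 1}"
  proof (rule card_ncps_transport[OF W _ rev_rank_image[OF W]])
    fix F assume F: "ncp_on W F" "edge_deg F (Max W) = 1"
    then have "W \<noteq> {}"
      by (rule ncp_on_leaf_nonempty)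
    then have eq: "Min {..<card W} = ?\<phi> (Max W)"
      using rev_rank_Max[OF W] Min_lessThan[of "card W"] W by (metis card_gt_0_iff)
    have "Max W \<in> W"
      using W \<open>W \<noteq> {}\<close> by simp
    then have "edge_deg (map_edges ?\<phi> F) (?\<phi> (Max W)) = edge_deg F (Max W)"
      by (rule edge_deg_map_edges[OF inj ncp_on_subset_Pow[OF F(1)]])
    then show "edge_deg (map_edges ?\<phi> F) (Min {..<card W}) = 1"
      by (simp only: eq F(2))
  qed (use rev_rank_strict_antimono_on[OF W] in auto)
  then show ?thesis
    unfolding ncps_last_leaf_def num_first_leaf_def ncps_first_leaf_def .
qed

lemma card_ends_apart_le:
  assumes W: "finite W"
  shows "card (ncps_ends_apart W) \<le> num_ends_apart (card W)"
proof -
  let ?\<phi> = "\<lambda>v. card {u\<in>W. u < v}"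
  have inj: "inj_on ?\<phi> W"
    by (rule strict_mono_on_imp_inj_on[OF rank_strict_mono_on[OF W]])
  have "card {F. ncp_on W F \<and> (edge_deg F (Min W) = 1 \<and> edge_deg F (Max W) = 1 \<and> \<not> linked F (Min W) (Max W))}
      \<le> card {F. ncp_on {..<card W} F \<and> (edge_deg F (Min {..<card W}) = 1 \<and> edge_deg F (Max {..<card W}) = 1
          \<and> \<not> linked F (Min {..<card W}) (Max {..<card W}))}"
  proof (rule card_ncps_transport[OF W _ rank_image[OF W]])
    fix F assume F: "ncp_on W F"
      "edge_deg F (Min W) = 1 \<and> edge_deg F (Max W) = 1 \<and> \<not> linked F (Min W) (Max W)"
    then have "W \<noteq> {}"
      using ncp_on_leaf_nonempty by blast
    then have ends: "Min W \<in> W" "Max W \<in> W" and pos: "0 < card W"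
      using W by (simp_all add: card_gt_0_iff)
    have eq: "Min {..<card W} = ?\<phi> (Min W)" "Max {..<card W} = ?\<phi> (Max W)"
      using rank_Min[OF W \<open>W \<noteq> {}\<close>] rank_Max[OF W \<open>W \<noteq> {}\<close>] Min_lessThan[OF pos] Max_lessThan[OF pos]
      by simp_all
    have FP: "F \<subseteq> Pow W"
      by (rule ncp_on_subset_Pow[OF F(1)])
    show "edge_deg (map_edges ?\<phi> F) (Min {..<card W}) = 1 \<and> edge_deg (map_edges ?\<phi> F) (Max {..<card W}) = 1
        \<and> \<not> linked (map_edges ?\<phi> F) (Min {..<card W}) (Max {..<card W})"
      unfolding eq using edge_deg_map_edges[OF inj FP] ends F(2) linked_map_edges[OF inj FP ends] by auto
  qed (use rank_strict_mono_on[OF W] in auto)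
  then show ?thesis
    unfolding ncps_ends_apart_def num_ends_apart_def .
qed

section \<open>Decomposition at the first vertex\<close>

lemma mem_ncps_first_leaf_lessThan:
  "F \<in> ncps_first_leaf {..<n} \<longleftrightarrow> ncp_on {..<n} F \<and> edge_deg F 0 = 1"
proof -
  have "0 < n" if "ncp_on {..<n} F" "edge_deg F v = 1" for v
    using ncp_on_leaf_nonempty[OF that] by (simp add: lessThan_empty_iff)
  then show ?thesis
    unfolding ncps_first_leaf_def using Min_lessThan by fastforce
qed

lemma mem_ncps_ends_apart_lessThan:
  "F \<in> ncps_ends_apart {..<n} \<longleftrightarrow>
     ncp_on {..<n} F \<and> edge_deg F 0 = 1 \<and> edge_deg F (n - 1) = 1 \<and> \<not> linked F 0 (n - 1)"
proof -
  have "0 < n" if "ncp_on {..<n} F" "edge_deg F v = 1" for v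
    using ncp_on_leaf_nonempty[OF that] by (simp add: lessThan_empty_iff)
  then show ?thesis
    unfolding ncps_ends_apart_def using Min_lessThan Max_lessThan by fastforce
qed

lemma edges_within_disjoint:
  assumes "ncp_on V F" "W1 \<inter> W2 \<subseteq> {x}"
  shows "edges_within F W1 \<inter> edges_within F W2 = {}"
  using assms ncp_on_edge_not_singleton unfolding edges_within_def by blast

lemma ncp_on_edge_side:
  assumes F: "ncp_on {..<n} F" and e: "{0, m} \<in> F" "e \<in> F" "0 \<notin> e"
  shows "e \<subseteq> {1..m} \<or> e \<subseteq> {m..<n}"
proof -
  obtain u w where uw: "u < w" "w < n" "e = {u, w}"
    using ncp_on_edge[OF F e(2)] by auto
  have "0 < u"
    using uw(3) e(3) by (cases u) auto
  have "\<not> (u < m \<and> m < w)"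
    using ncp_on_no_crossing[OF F \<open>0 < u\<close> _ _ e(1)] e(2) uw(3) by blast
  then show ?thesis
    using uw \<open>0 < u\<close> by auto
qed

lemma leaf_split:
  assumes F: "ncp_on {..<n} F" and e: "{0, m} \<in> F" and leaf: "edge_deg F 0 = 1" and m: "0 < m"
  defines "P \<equiv> edges_within F {1..m}" and "Q \<equiv> edges_within F {m..<n}"
  shows "F = insert {0, m} (P \<union> Q)"
    and "edge_deg F v = edge_deg P v + edge_deg Q v + (if v \<in> {0, m} then 1 else 0)"
proof -
  have fin: "finite F"
    by (rule ncp_on_finite[OF _ F]) simp
  show split: "F = insert {0, m} (P \<union> Q)"
  proof
    show "F \<subseteq> insert {0, m} (P \<union> Q)"
    proof
      fix e' assume e': "e' \<in> F"
      show "e' \<in> insert {0, m} (P \<union> Q)"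
      proof (cases "0 \<in> e'")
        case True
        then show ?thesis
          using edge_deg_eq_1_unique[OF leaf e' e] by simp
      next
        case False
        then show ?thesis
          using ncp_on_edge_side[OF F e e'] e' unfolding P_def Q_def edges_within_def by blast
      qed
    qed
  qed (use e in \<open>auto simp: P_def Q_def edges_within_def\<close>)
  have "P \<inter> Q = {}"
    unfolding P_def Q_def by (rule edges_within_disjoint[OF F, of _ _ m]) auto
  moreover have "{0, m} \<notin> P \<union> Q" "finite P" "finite Q"
    using m fin by (auto simp: P_def Q_def edges_within_def)
  ultimately show "edge_deg F v = edge_deg P v + edge_deg Q v + (if v \<in> {0, m} then 1 else 0)"
    by (subst split) (simp add: edge_deg_insert edge_deg_union)
qed

lemma first_leaf_neighbour:
  assumes F: "ncp_on {..<n} F" and leaf: "edge_deg F 0 = 1"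
  obtains m where "{0, m} \<in> F" "0 < m" "m < n"
proof -
  have "0 < edge_deg F 0"
    using leaf by simp
  then obtain e where "e \<in> F" "0 \<in> e"
    by (rule edge_deg_pos_obtain)
  moreover obtain a b where "b < n" "a < b" "e = {a, b}"
    using ncp_on_edge[OF F \<open>e \<in> F\<close>] by blast
  ultimately have "{0, b} \<in> F" "0 < b" "b < n"
    by auto
  then show ?thesis
    by (rule that)
qed

lemma mem_ncps_remove_isolated:
  "ncp_on W P \<Longrightarrow> finite P \<Longrightarrow> edge_deg P v = 0 \<Longrightarrow> W - {v} = W' \<Longrightarrow> P \<in> ncps W'"
  using ncp_on_remove_isolated unfolding ncps_def by blast

lemma ncps_or_first_leaf:
  assumes "ncp_on W P" "finite P" "Min W = v" "edge_deg P v \<le> 1" "W - {v} = W'"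
  shows "P \<in> ncps W' \<union> ncps_first_leaf W"
  using assms mem_ncps_remove_isolated[OF assms(1,2) _ assms(5)] unfolding ncps_first_leaf_def
  by (cases "edge_deg P v = 0") auto

lemma ncps_or_last_leaf:
  assumes "ncp_on W P" "finite P" "Max W = v" "edge_deg P v \<le> 1" "W - {v} = W'"
  shows "P \<in> ncps W' \<union> ncps_last_leaf W"
  using assms mem_ncps_remove_isolated[OF assms(1,2) _ assms(5)] unfolding ncps_last_leaf_def
  by (cases "edge_deg P v = 0") auto

lemma leaf_split_cases:
  assumes F: "ncp_on {..<n} F" and e: "{0, m} \<in> F" and leaf: "edge_deg F 0 = 1" and m: "0 < m" "m < n"
  defines "P \<equiv> edges_within F {1..m}" and "Q \<equiv> edges_within F {m..<n}"
  obtains "P \<in> ncps_last_leaf {1..m}" "edge_deg Q m = 0"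
    | "P \<in> ncps {1..<m}" "edge_deg Q m \<le> 1"
proof -
  have fin: "finite F"
    by (rule ncp_on_finite[OF _ F]) simp
  have P: "ncp_on {1..m} P" "finite P"
    unfolding P_def using ncp_on_edges_within[OF F fin] fin by (auto simp: edges_within_def)
  have "edge_deg P m + edge_deg Q m \<le> 1"
    using leaf_split(2)[OF F e leaf m(1), of m] ncp_on_edge_deg_le[OF F, of m]
    unfolding P_def Q_def by simp
  moreover have "Max {1..m} = m"
    using m by (auto intro!: Max_eqI)
  ultimately show ?thesis
    using that ncps_or_last_leaf[OF P, of m "{1..<m}"] mem_ncps_remove_isolated[OF P, of m "{1..<m}"]
    unfolding ncps_last_leaf_def by force
qed

definition leaf_parts :: "nat \<Rightarrow> nat \<Rightarrow> (nat set set \<times> nat set set) set" where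
  "leaf_parts n m = ncps_last_leaf {1..m} \<times> ncps {m<..<n} \<union> ncps {1..<m} \<times> (ncps {m<..<n} \<union> ncps_first_leaf {m..<n})"

definition apart_parts :: "nat \<Rightarrow> nat \<Rightarrow> (nat set set \<times> nat set set) set" where
  "apart_parts n m = ncps_last_leaf {1..m} \<times> ncps_last_leaf {m<..<n}
     \<union> ncps {1..<m} \<times> (ncps_ends_apart {m..<n} \<union> ncps_last_leaf {m<..<n})"

lemma leaf_parts_mem:
  assumes F: "ncp_on {..<n} F" and e: "{0, m} \<in> F" and leaf: "edge_deg F 0 = 1" and m: "0 < m" "m < n"
  shows "(edges_within F {1..m}, edges_within F {m..<n}) \<in> leaf_parts n m"
proof -
  let ?Q = "edges_within F {m..<n}"
  have fin: "finite F"
    by (rule ncp_on_finite[OF _ F]) simp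
  have Q: "ncp_on {m..<n} ?Q" "finite ?Q"
    using ncp_on_edges_within[OF F fin] fin by (auto simp: edges_within_def)
  have "Min {m..<n} = m" "{m..<n} - {m} = {m<..<n}"
    using m by (auto intro!: Min_eqI)
  show ?thesis
  proof (rule leaf_split_cases[OF F e leaf m])
    assume "edges_within F {1..m} \<in> ncps_last_leaf {1..m}" "edge_deg ?Q m = 0"
    then show ?thesis
      using mem_ncps_remove_isolated[OF Q, of m "{m<..<n}"] \<open>{m..<n} - {m} = {m<..<n}\<close>
      unfolding leaf_parts_def by blast
  next
    assume "edges_within F {1..m} \<in> ncps {1..<m}" "edge_deg ?Q m \<le> 1"
    then show ?thesis
      using ncps_or_first_leaf[OF Q \<open>Min {m..<n} = m\<close> _ \<open>{m..<n} - {m} = {m<..<n}\<close>]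
      unfolding leaf_parts_def by blast
  qed
qed

lemma apart_parts_mem:
  assumes F: "ncp_on {..<n} F" and e: "{0, m} \<in> F" and leaf: "edge_deg F 0 = 1" and m: "0 < m" "m < n - 1"
    and last: "edge_deg F (n - 1) = 1" and apart: "\<not> linked F 0 (n - 1)"
  shows "(edges_within F {1..m}, edges_within F {m..<n}) \<in> apart_parts n m"
proof -
  define Q where "Q = edges_within F {m..<n}"
  have fin: "finite F"
    by (rule ncp_on_finite[OF _ F]) simp
  have Q: "ncp_on {m..<n} Q" "finite Q"
    unfolding Q_def using ncp_on_edges_within[OF F fin] fin by (auto simp: edges_within_def)
  have "edge_deg (edges_within F {1..m}) (n - 1) = 0" "n - 1 \<notin> {0, m}"
    using m by (auto intro: edge_deg_edges_within_outside)
  then have Q_last: "edge_deg Q (n - 1) = 1"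
    using leaf_split(2)[OF F e leaf m(1), of "n - 1"] last unfolding Q_def by simp
  have ends: "Min {m..<n} = m" "Max {m..<n} = n - 1" "Max {m<..<n} = n - 1" "{m..<n} - {m} = {m<..<n}"
    using m by (auto intro!: Min_eqI Max_eqI)
  have Q_last_leaf: "Q \<in> ncps_last_leaf {m<..<n}" if "edge_deg Q m = 0"
    using mem_ncps_remove_isolated[OF Q that ends(4)] Q_last ends(3)
    unfolding ncps_def ncps_last_leaf_def by simp
  have "\<not> linked Q m (n - 1)"
  proof
    assume "linked Q m (n - 1)"
    moreover have "Q \<subseteq> F" "{0, m} \<notin> Q"
      using m by (auto simp: Q_def edges_within_def)
    moreover have "edge_deg Q 0 = 0"
      unfolding Q_def using m by (intro edge_deg_edges_within_outside) simp
    ultimately have "linked F 0 (n - 1)"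
      using linked_extend[OF fin e] m by simp
    then show False
      using apart by contradiction
  qed
  then have "Q \<in> ncps_ends_apart {m..<n}" if "edge_deg Q m = 1"
    using Q(1) that Q_last ends unfolding ncps_ends_apart_def by simp
  then have Q_mem: "Q \<in> ncps_ends_apart {m..<n} \<union> ncps_last_leaf {m<..<n}" if "edge_deg Q m \<le> 1"
    using that Q_last_leaf by (cases "edge_deg Q m = 0") auto
  have "m < n"
    using m by simp
  show ?thesis
    by (rule leaf_split_cases[OF F e leaf m(1) \<open>m < n\<close>])
      (use Q_last_leaf Q_mem in \<open>auto simp: apart_parts_def Q_def\<close>)
qed

lemma card_le_sum_of_cover:
  assumes "A \<subseteq> g ` Sigma I T" "finite I" "\<And>i. i \<in> I \<Longrightarrow> finite (T i)"
  shows "card A \<le> (\<Sum>i\<in>I. card (T i))"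
proof -
  have "card A \<le> card (g ` Sigma I T)"
    using assms by (intro card_mono) auto
  also have "\<dots> \<le> card (Sigma I T)"
    by (rule card_image_le) (use assms in auto)
  also have "\<dots> = (\<Sum>i\<in>I. card (T i))"
    using assms by (intro card_SigmaI) auto
  finally show ?thesis .
qed

lemma card_product_union_le:
  "card (A \<times> B \<union> C \<times> (D \<union> E)) \<le> card A * card B + card C * (card D + card E)"
proof -
  have "card (A \<times> B \<union> C \<times> (D \<union> E)) \<le> card (A \<times> B) + card C * card (D \<union> E)"
    using card_Un_le[of "A \<times> B" "C \<times> (D \<union> E)"] by (simp add: card_cartesian_product)
  also have "\<dots> \<le> card A * card B + card C * (card D + card E)"
    by (simp add: card_cartesian_product card_Un_le)
  finally show ?thesis .
qed

lemma first_leaf_decomposition: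
  "card (ncps_first_leaf {..<n}) \<le> (\<Sum>m\<in>{1..<n}. card (ncps_last_leaf {1..m}) * card (ncps {m<..<n})
     + card (ncps {1..<m}) * (card (ncps {m<..<n}) + card (ncps_first_leaf {m..<n})))"
proof -
  let ?glue = "\<lambda>(m, (P, Q)). insert {0, m} (P \<union> Q)"
  have "ncps_first_leaf {..<n} \<subseteq> ?glue ` Sigma {1..<n} (leaf_parts n)"
  proof
    fix F assume "F \<in> ncps_first_leaf {..<n}"
    then have F: "ncp_on {..<n} F" and leaf: "edge_deg F 0 = 1"
      by (simp_all add: mem_ncps_first_leaf_lessThan)
    obtain m where m: "{0, m} \<in> F" "0 < m" "m < n"
      using first_leaf_neighbour[OF F leaf] .
    show "F \<in> ?glue ` Sigma {1..<n} (leaf_parts n)"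
      using leaf_split(1)[OF F m(1) leaf m(2)] leaf_parts_mem[OF F m(1) leaf m(2,3)] m
      by (intro image_eqI[where x = "(m, edges_within F {1..m}, edges_within F {m..<n})"]) auto
  qed
  then have "card (ncps_first_leaf {..<n}) \<le> (\<Sum>m\<in>{1..<n}. card (leaf_parts n m))"
    by (rule card_le_sum_of_cover)
      (simp_all add: leaf_parts_def finite_ncps finite_ncps_first_leaf finite_ncps_last_leaf)
  also have "\<dots> \<le> (\<Sum>m\<in>{1..<n}. card (ncps_last_leaf {1..m}) * card (ncps {m<..<n})
     + card (ncps {1..<m}) * (card (ncps {m<..<n}) + card (ncps_first_leaf {m..<n})))"
    unfolding leaf_parts_def by (intro sum_mono card_product_union_le)
  finally show ?thesis .
qed

lemma ends_apart_decomposition: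
  "card (ncps_ends_apart {..<n}) \<le> (\<Sum>m\<in>{1..<n-1}. card (ncps_last_leaf {1..m}) * card (ncps_last_leaf {m<..<n})
     + card (ncps {1..<m}) * (card (ncps_ends_apart {m..<n}) + card (ncps_last_leaf {m<..<n})))"
proof -
  let ?glue = "\<lambda>(m, (P, Q)). insert {0, m} (P \<union> Q)"
  have "ncps_ends_apart {..<n} \<subseteq> ?glue ` Sigma {1..<n-1} (apart_parts n)"
  proof
    fix F assume "F \<in> ncps_ends_apart {..<n}"
    then have F: "ncp_on {..<n} F" and leaf: "edge_deg F 0 = 1" and last: "edge_deg F (n - 1) = 1"
      and apart: "\<not> linked F 0 (n - 1)"
      by (simp_all add: mem_ncps_ends_apart_lessThan)
    obtain m where m: "{0, m} \<in> F" "0 < m" "m < n"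
      using first_leaf_neighbour[OF F leaf] .
    have "m \<noteq> n - 1"
      using apart linked_edge[OF m(1)] m(2) by auto
    with m have m_less: "m < n - 1"
      by simp
    show "F \<in> ?glue ` Sigma {1..<n-1} (apart_parts n)"
      using leaf_split(1)[OF F m(1) leaf m(2)] apart_parts_mem[OF F m(1) leaf m(2) m_less last apart] m m_less
      by (intro image_eqI[where x = "(m, edges_within F {1..m}, edges_within F {m..<n})"]) auto
  qed
  then have "card (ncps_ends_apart {..<n}) \<le> (\<Sum>m\<in>{1..<n-1}. card (apart_parts n m))"
    by (rule card_le_sum_of_cover)
      (simp_all add: apart_parts_def finite_ncps finite_ncps_last_leaf finite_ncps_ends_apart)
  also have "\<dots> \<le> (\<Sum>m\<in>{1..<n-1}. card (ncps_last_leaf {1..m}) * card (ncps_last_leaf {m<..<n})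
     + card (ncps {1..<m}) * (card (ncps_ends_apart {m..<n}) + card (ncps_last_leaf {m<..<n})))"
    unfolding apart_parts_def by (intro sum_mono card_product_union_le)
  finally show ?thesis .
qed

lemma two_neighbours:
  assumes F: "ncp_on {..<n} F" and deg: "edge_deg F 0 = 2"
  obtains m1 m2 where "0 < m1" "m1 < m2" "m2 < n" "{e\<in>F. 0 \<in> e} = {{0, m1}, {0, m2}}"
proof -
  obtain e1 e2 where E: "{e\<in>F. 0 \<in> e} = {e1, e2}" "e1 \<noteq> e2"
    using deg unfolding edge_deg_def card_2_iff by blast
  have nbr: "\<exists>m. 0 < m \<and> m < n \<and> e = {0, m}" if "e \<in> {e1, e2}" for e
  proof -
    have "e \<in> F" "0 \<in> e"
      using that E(1) by blast+
    moreover obtain a b where "b < n" "a < b" "e = {a, b}"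
      using ncp_on_edge[OF F \<open>e \<in> F\<close>] by blast
    ultimately show ?thesis
      by auto
  qed
  obtain a b where ab: "0 < a" "a < n" "e1 = {0, a}" "0 < b" "b < n" "e2 = {0, b}"
    using nbr[of e1] nbr[of e2] by auto
  then have "a \<noteq> b"
    using E(2) by auto
  then show ?thesis
  proof (cases "a < b")
    case True
    then show ?thesis
      using that[of a b] ab E(1) by simp
  next
    case False
    then show ?thesis
      using that[of b a] ab E(1) \<open>a \<noteq> b\<close> by (simp add: insert_commute)
  qed
qed

lemma hub_split:
  assumes F: "ncp_on {..<n} F" and nbrs: "{e\<in>F. 0 \<in> e} = {{0, m1}, {0, m2}}" and m: "0 < m1" "m1 < m2"
  defines "P1 \<equiv> edges_within F {1..m1}" and "P2 \<equiv> edges_within F {m1..m2}"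
    and "P3 \<equiv> edges_within F {m2..<n}"
  shows "F = insert {0, m1} (insert {0, m2} (P1 \<union> P2 \<union> P3))"
    and "edge_deg F v = edge_deg P1 v + edge_deg P2 v + edge_deg P3 v
      + (if v \<in> {0, m1} then 1 else 0) + (if v \<in> {0, m2} then 1 else 0)"
proof -
  have fin: "finite F"
    by (rule ncp_on_finite[OF _ F]) simp
  have e: "{0, m1} \<in> F" "{0, m2} \<in> F"
    using nbrs by blast+
  show split: "F = insert {0, m1} (insert {0, m2} (P1 \<union> P2 \<union> P3))"
  proof
    show "F \<subseteq> insert {0, m1} (insert {0, m2} (P1 \<union> P2 \<union> P3))"
    proof
      fix e' assume e': "e' \<in> F"
      show "e' \<in> insert {0, m1} (insert {0, m2} (P1 \<union> P2 \<union> P3))"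
      proof (cases "0 \<in> e'")
        case True
        then show ?thesis
          using e' nbrs by blast
      next
        case False
        have "e' \<subseteq> {1..m1} \<or> e' \<subseteq> {m1..<n}" "e' \<subseteq> {1..m2} \<or> e' \<subseteq> {m2..<n}"
          using ncp_on_edge_side[OF F e(1) e' False] ncp_on_edge_side[OF F e(2) e' False] by blast+
        moreover have "{m1..<n} \<inter> {1..m2} \<subseteq> {m1..m2}"
          by auto
        ultimately have "e' \<subseteq> {1..m1} \<or> e' \<subseteq> {m1..m2} \<or> e' \<subseteq> {m2..<n}"
          by blast
        then show ?thesis
          using e' unfolding P1_def P2_def P3_def edges_within_def by blast
      qed
    qed
  qed (use e in \<open>auto simp: P1_def P2_def P3_def edges_within_def\<close>)
  have disjoint: "P1 \<inter> P2 = {}" "P1 \<inter> P3 = {}" "P2 \<inter> P3 = {}"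
    unfolding P1_def P2_def P3_def using m
    by (intro edges_within_disjoint[OF F, of _ _ m1] edges_within_disjoint[OF F, of _ _ m2]; force)+
  have finite: "finite P1" "finite P2" "finite P3"
    using fin by (simp_all add: P1_def P2_def P3_def edges_within_def)
  have "{0, m2} \<notin> P1 \<union> P2 \<union> P3" "{0, m1} \<notin> insert {0, m2} (P1 \<union> P2 \<union> P3)"
    using m by (auto simp: P1_def P2_def P3_def edges_within_def doubleton_eq_iff)
  then show "edge_deg F v = edge_deg P1 v + edge_deg P2 v + edge_deg P3 v
      + (if v \<in> {0, m1} then 1 else 0) + (if v \<in> {0, m2} then 1 else 0)"
    using finite disjoint by (subst split) (simp add: edge_deg_insert edge_deg_union Int_Un_distrib2)
qed

text \<open>The four blocks correspond to the degrees \<open>(0, 0)\<close>, \<open>(0, 1)\<close>, \<open>(1, 0)\<close>, \<open>(1, 1)\<close> of the middle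
  part at \<open>m1\<close> and \<open>m2\<close>.\<close>
definition hub_parts :: "nat \<Rightarrow> nat \<Rightarrow> nat \<Rightarrow> (nat set set \<times> nat set set \<times> nat set set) set" where
  "hub_parts n m1 m2 =
     (ncps {1..<m1} \<union> ncps_last_leaf {1..m1}) \<times> (ncps {m1<..<m2} \<times> (ncps {m2<..<n} \<union> ncps_first_leaf {m2..<n}))
   \<union> (ncps {1..<m1} \<union> ncps_last_leaf {1..m1}) \<times> (ncps_last_leaf {m1<..m2} \<times> ncps {m2<..<n})
   \<union> ncps {1..<m1} \<times> (ncps_first_leaf {m1..<m2} \<times> (ncps {m2<..<n} \<union> ncps_first_leaf {m2..<n}))
   \<union> ncps {1..<m1} \<times> (ncps_ends_apart {m1..m2} \<times> ncps {m2<..<n})"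

lemma hub_parts_mem:
  assumes F: "ncp_on {..<n} F" and nbrs: "{e\<in>F. 0 \<in> e} = {{0, m1}, {0, m2}}" and m: "0 < m1" "m1 < m2" "m2 < n"
  shows "(edges_within F {1..m1}, edges_within F {m1..m2}, edges_within F {m2..<n}) \<in> hub_parts n m1 m2"
proof -
  define P1 P2 P3 where "P1 = edges_within F {1..m1}" and "P2 = edges_within F {m1..m2}"
    and "P3 = edges_within F {m2..<n}"
  have fin: "finite F"
    by (rule ncp_on_finite[OF _ F]) simp
  have P: "ncp_on {1..m1} P1" "finite P1" "ncp_on {m1..m2} P2" "finite P2" "ncp_on {m2..<n} P3" "finite P3"
    unfolding P1_def P2_def P3_def using ncp_on_edges_within[OF F fin] fin by (auto simp: edges_within_def)
  have deg: "edge_deg F v = edge_deg P1 v + edge_deg P2 v + edge_deg P3 v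
      + (if v \<in> {0, m1} then 1 else 0) + (if v \<in> {0, m2} then 1 else 0)" for v
    unfolding P1_def P2_def P3_def by (rule hub_split(2)[OF F nbrs m(1,2)])
  have "edge_deg P3 m1 = 0" "edge_deg P1 m2 = 0"
    unfolding P1_def P3_def using m by (simp_all add: edge_deg_edges_within_outside)
  then have deg_m1: "edge_deg P1 m1 + edge_deg P2 m1 \<le> 1" and deg_m2: "edge_deg P2 m2 + edge_deg P3 m2 \<le> 1"
    using deg[of m1] deg[of m2] ncp_on_edge_deg_le[OF F, of m1] ncp_on_edge_deg_le[OF F, of m2] m by auto
  have ends: "Max {1..m1} = m1" "Min {m2..<n} = m2" "Min {m1..m2} = m1" "Max {m1..m2} = m2"
    "Min {m1..<m2} = m1" "Max {m1<..m2} = m2" "{1..m1} - {m1} = {1..<m1}" "{m2..<n} - {m2} = {m2<..<n}"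
    "{m1..m2} - {m1} = {m1<..m2}" "{m1..m2} - {m2} = {m1..<m2}" "{m1<..m2} - {m2} = {m1<..<m2}"
    using m by (auto intro!: Min_eqI Max_eqI)
  have left: "P1 \<in> ncps {1..<m1} \<union> ncps_last_leaf {1..m1}"
    using ncps_or_last_leaf[OF P(1,2) ends(1) _ ends(7)] deg_m1 by simp
  have right: "P3 \<in> ncps {m2<..<n} \<union> ncps_first_leaf {m2..<n}"
    using ncps_or_first_leaf[OF P(5,6) ends(2) _ ends(8)] deg_m2 by simp
  have left0: "P1 \<in> ncps {1..<m1}" if "edge_deg P2 m1 = 1"
    using mem_ncps_remove_isolated[OF P(1,2) _ ends(7)] deg_m1 that by simp
  have right0: "P3 \<in> ncps {m2<..<n}" if "edge_deg P2 m2 = 1"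
    using mem_ncps_remove_isolated[OF P(5,6) _ ends(8)] deg_m2 that by simp
  consider "edge_deg P2 m1 = 0" "edge_deg P2 m2 = 0" | "edge_deg P2 m1 = 0" "edge_deg P2 m2 = 1"
    | "edge_deg P2 m1 = 1" "edge_deg P2 m2 = 0" | "edge_deg P2 m1 = 1" "edge_deg P2 m2 = 1"
    using deg_m1 deg_m2 by linarith
  then have "(P1, P2, P3) \<in> hub_parts n m1 m2"
  proof cases
    case 1
    have "ncp_on {m1<..m2} P2"
      using ncp_on_remove_isolated[OF P(3,4) 1(1)] ends(9) by simp
    then have "P2 \<in> ncps {m1<..<m2}"
      using mem_ncps_remove_isolated[OF _ P(4) 1(2) ends(11)] by simp
    then show ?thesis
      using left right unfolding hub_parts_def by blast
  next
    case 2
    have "P2 \<in> ncps_last_leaf {m1<..m2}"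
      using mem_ncps_remove_isolated[OF P(3,4) 2(1) ends(9)] 2(2) ends(6)
      unfolding ncps_def ncps_last_leaf_def by simp
    then show ?thesis
      using left right0 2 unfolding hub_parts_def by blast
  next
    case 3
    have "P2 \<in> ncps_first_leaf {m1..<m2}"
      using mem_ncps_remove_isolated[OF P(3,4) 3(2) ends(10)] 3(1) ends(5)
      unfolding ncps_def ncps_first_leaf_def by simp
    then show ?thesis
      using left0 right 3 unfolding hub_parts_def by blast
  next
    case 4
    have e: "{0, m1} \<in> F" "{0, m2} \<in> F"
      using nbrs by blast+
    have "P2 \<subseteq> F"
      unfolding P2_def edges_within_def by blast
    moreover have "edge_deg P2 0 = 0"
      unfolding P2_def using m by (intro edge_deg_edges_within_outside) simp
    ultimately have "\<not> linked P2 m1 m2"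
      by (rule not_linked_neighbours[OF ncp_on_forest[OF F] fin e]) (use m in auto)
    then have "P2 \<in> ncps_ends_apart {m1..m2}"
      using P(3) 4 ends unfolding ncps_ends_apart_def by simp
    then show ?thesis
      using left0 right0 4 unfolding hub_parts_def by blast
  qed
  then show ?thesis
    unfolding P1_def P2_def P3_def .
qed

lemma finite_hub_parts: "finite (hub_parts n m1 m2)"
  by (simp add: hub_parts_def finite_ncps finite_ncps_first_leaf finite_ncps_last_leaf finite_ncps_ends_apart)

lemma hub_decomposition:
  "card {F. ncp_on {..<n} F \<and> edge_deg F 0 = 2}
     \<le> (\<Sum>(m1, m2)\<in>{(m1, m2). 0 < m1 \<and> m1 < m2 \<and> m2 < n}. card (hub_parts n m1 m2))"
proof -
  let ?pairs = "{(m1, m2). 0 < m1 \<and> m1 < m2 \<and> m2 < n}"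
  let ?glue = "\<lambda>((m1, m2), (P1, P2, P3)). insert {0, m1} (insert {0, m2} (P1 \<union> P2 \<union> P3))"
  have "{F. ncp_on {..<n} F \<and> edge_deg F 0 = 2} \<subseteq> ?glue ` Sigma ?pairs (\<lambda>(m1, m2). hub_parts n m1 m2)"
  proof
    fix F assume "F \<in> {F. ncp_on {..<n} F \<and> edge_deg F 0 = 2}"
    then have F: "ncp_on {..<n} F" "edge_deg F 0 = 2"
      by simp_all
    obtain m1 m2 where m: "0 < m1" "m1 < m2" "m2 < n" and nbrs: "{e\<in>F. 0 \<in> e} = {{0, m1}, {0, m2}}"
      using two_neighbours[OF F] .
    let ?parts = "(edges_within F {1..m1}, edges_within F {m1..m2}, edges_within F {m2..<n})"
    have "F = ?glue ((m1, m2), ?parts)"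
      using hub_split(1)[OF F(1) nbrs m(1,2)] by simp
    moreover have "((m1, m2), ?parts) \<in> Sigma ?pairs (\<lambda>(m1, m2). hub_parts n m1 m2)"
      using hub_parts_mem[OF F(1) nbrs m] m by simp
    ultimately show "F \<in> ?glue ` Sigma ?pairs (\<lambda>(m1, m2). hub_parts n m1 m2)"
      by (rule image_eqI)
  qed
  moreover have "finite ?pairs"
    by (rule finite_subset[of _ "{..<n} \<times> {..<n}"]) auto
  ultimately have "card {F. ncp_on {..<n} F \<and> edge_deg F 0 = 2}
      \<le> (\<Sum>p\<in>?pairs. card ((\<lambda>(m1, m2). hub_parts n m1 m2) p))"
    by (rule card_le_sum_of_cover) (simp add: finite_hub_parts split: prod.splits)
  also have "\<dots> = (\<Sum>(m1, m2)\<in>?pairs. card (hub_parts n m1 m2))"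
    by (simp add: case_prod_unfold)
  finally show ?thesis .
qed

lemma card_Un_le_add: "card A \<le> a \<Longrightarrow> card B \<le> b \<Longrightarrow> card (A \<union> B) \<le> a + b"
  using card_Un_le[of A B] by linarith

lemma card_Times_le_mult: "card A \<le> a \<Longrightarrow> card B \<le> b \<Longrightarrow> card (A \<times> B) \<le> a * b"
  by (simp add: card_cartesian_product mult_le_mono)

lemma card_hub_parts_le:
  assumes m: "0 < m1" "m1 < m2" "m2 < n"
  shows "card (hub_parts n m1 m2) \<le> two_neighbour_terms num_ncps (\<lambda>i. num_ncps i + num_first_leaf (i + 1))
    num_first_leaf num_ends_apart (m1 - 1) (m2 - m1 - 1) (n - 1 - m2)"
proof -
  define l k r where "l = m1 - 1" and "k = m2 - m1 - 1" and "r = n - 1 - m2"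
  have sizes: "card {1..<m1} = l" "card {1..m1} = l + 1" "card {m1<..<m2} = k" "card {m1<..m2} = k + 1"
    "card {m1..<m2} = k + 1" "card {m1..m2} = k + 2" "card {m2<..<n} = r" "card {m2..<n} = r + 1"
    using m by (simp_all add: l_def k_def r_def)
  have bounds: "card (ncps {1..<m1}) \<le> num_ncps l" "card (ncps_last_leaf {1..m1}) \<le> num_first_leaf (l + 1)"
    "card (ncps {m1<..<m2}) \<le> num_ncps k" "card (ncps_last_leaf {m1<..m2}) \<le> num_first_leaf (k + 1)"
    "card (ncps_first_leaf {m1..<m2}) \<le> num_first_leaf (k + 1)"
    "card (ncps_ends_apart {m1..m2}) \<le> num_ends_apart (k + 2)"
    "card (ncps {m2<..<n}) \<le> num_ncps r" "card (ncps_first_leaf {m2..<n}) \<le> num_first_leaf (r + 1)"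
    by (metis sizes finite_atLeastLessThan finite_atLeastAtMost finite_greaterThanLessThan finite_greaterThanAtMost
        card_ncps_le card_last_leaf_le card_first_leaf_le card_ends_apart_le)+
  have "card (hub_parts n m1 m2)
      \<le> (num_ncps l + num_first_leaf (l + 1)) * (num_ncps k * (num_ncps r + num_first_leaf (r + 1)))
      + (num_ncps l + num_first_leaf (l + 1)) * (num_first_leaf (k + 1) * num_ncps r)
      + num_ncps l * (num_first_leaf (k + 1) * (num_ncps r + num_first_leaf (r + 1)))
      + num_ncps l * (num_ends_apart (k + 2) * num_ncps r)"
    unfolding hub_parts_def by (intro card_Un_le_add card_Times_le_mult) (fact bounds)+
  also have "\<dots> = two_neighbour_terms num_ncps (\<lambda>i. num_ncps i + num_first_leaf (i + 1))
    num_first_leaf num_ends_apart l k r"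
    unfolding two_neighbour_terms_def by (simp add: algebra_simps)
  finally show ?thesis
    unfolding l_def k_def r_def .
qed

lemma ncps_decomposition:
  assumes "0 < n"
  shows "card (ncps {..<n}) \<le> card (ncps {1..<n}) + card (ncps_first_leaf {..<n})
    + card {F. ncp_on {..<n} F \<and> edge_deg F 0 = 2}"
proof -
  have "ncps {..<n} \<subseteq> ncps {1..<n} \<union> ncps_first_leaf {..<n} \<union> {F. ncp_on {..<n} F \<and> edge_deg F 0 = 2}"
  proof
    fix F assume "F \<in> ncps {..<n}"
    then have F: "ncp_on {..<n} F"
      by (simp add: ncps_def)
    have "edge_deg F 0 \<le> 2"
      by (rule ncp_on_edge_deg_le[OF F])
    then consider "edge_deg F 0 = 0" | "edge_deg F 0 = 1" | "edge_deg F 0 = 2"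
      by linarith
    then show "F \<in> ncps {1..<n} \<union> ncps_first_leaf {..<n} \<union> {F. ncp_on {..<n} F \<and> edge_deg F 0 = 2}"
    proof cases
      case 1
      have "F \<in> ncps {1..<n}"
        by (rule mem_ncps_remove_isolated[OF F ncp_on_finite[OF _ F] 1]) auto
      then show ?thesis
        by blast
    qed (use F in \<open>simp_all add: mem_ncps_first_leaf_lessThan\<close>)
  qed
  then have "card (ncps {..<n})
      \<le> card (ncps {1..<n} \<union> ncps_first_leaf {..<n} \<union> {F. ncp_on {..<n} F \<and> edge_deg F 0 = 2})"
    by (rule card_mono[rotated])
      (use finite_ncps[of "{1..<n}"] finite_ncps[of "{..<n}"] finite_ncps_first_leaf[of "{..<n}"] in
        \<open>auto simp: ncps_def intro: finite_subset\<close>)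
  also have "\<dots> \<le> card (ncps {1..<n}) + card (ncps_first_leaf {..<n}) + card {F. ncp_on {..<n} F \<and> edge_deg F 0 = 2}"
    by (intro card_Un_le_add order_refl)
  finally show ?thesis .
qed

section \<open>Recurrences for the counts\<close>

lemma sum_shift_from_1: "(\<Sum>k\<in>{1..<m + 2}. f k) = (\<Sum>i\<le>m. f (i + 1 :: nat))"
  by (rule sum.reindex_bij_witness[where i = "\<lambda>i. i + 1" and j = "\<lambda>k. k - 1"]) auto

lemma num_ncps_0: "num_ncps 0 \<le> 1"
proof -
  have "ncps {..<0} \<subseteq> {{}}"
    using ncp_on_empty by (auto simp: ncps_def)
  then have "card (ncps {..<0}) \<le> card {{} :: nat set set}"
    by (rule card_mono[rotated]) simp
  then show ?thesis
    unfolding num_ncps_def by simp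
qed

lemma num_first_leaf_rec:
  "num_first_leaf (m + 2) \<le> (\<Sum>i\<le>m. num_first_leaf (i + 1) * num_ncps (m - i)
     + num_ncps i * (num_ncps (m - i) + num_first_leaf (m - i + 1)))"
proof -
  have "num_first_leaf (m + 2) \<le> (\<Sum>k\<in>{1..<m + 2}. card (ncps_last_leaf {1..k}) * card (ncps {k<..<m + 2})
      + card (ncps {1..<k}) * (card (ncps {k<..<m + 2}) + card (ncps_first_leaf {k..<m + 2})))"
    unfolding num_first_leaf_def by (rule first_leaf_decomposition)
  also have "\<dots> \<le> (\<Sum>k\<in>{1..<m + 2}. num_first_leaf k * num_ncps (m + 1 - k)
      + num_ncps (k - 1) * (num_ncps (m + 1 - k) + num_first_leaf (m + 2 - k)))"
    using card_last_leaf_le[of "{1..k}" for k] card_ncps_le[of "{k<..<m + 2}" for k]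
      card_ncps_le[of "{1..<k}" for k] card_first_leaf_le[of "{k..<m + 2}" for k]
    by (intro sum_mono add_mono mult_le_mono) auto
  also have "\<dots> = (\<Sum>i\<le>m. num_first_leaf (i + 1) * num_ncps (m - i)
      + num_ncps i * (num_ncps (m - i) + num_first_leaf (m - i + 1)))"
    unfolding sum_shift_from_1 by (intro sum.cong refl) (simp add: Suc_diff_le)
  finally show ?thesis .
qed

lemma num_ends_apart_rec:
  "num_ends_apart (m + 3) \<le> (\<Sum>l\<le>m. num_first_leaf (l + 1) * num_first_leaf (m - l + 1)
     + num_ncps l * (num_ends_apart (m - l + 2) + num_first_leaf (m - l + 1)))"
proof -
  have "num_ends_apart (m + 3) \<le> (\<Sum>k\<in>{1..<m + 2}. card (ncps_last_leaf {1..k}) * card (ncps_last_leaf {k<..<m + 3})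
      + card (ncps {1..<k}) * (card (ncps_ends_apart {k..<m + 3}) + card (ncps_last_leaf {k<..<m + 3})))"
    using ends_apart_decomposition[of "m + 3"] unfolding num_ends_apart_def by simp
  also have "\<dots> \<le> (\<Sum>k\<in>{1..<m + 2}. num_first_leaf k * num_first_leaf (m + 2 - k)
      + num_ncps (k - 1) * (num_ends_apart (m + 3 - k) + num_first_leaf (m + 2 - k)))"
    using card_last_leaf_le[of "{1..k}" for k] card_last_leaf_le[of "{k<..<m + 3}" for k]
      card_ncps_le[of "{1..<k}" for k] card_ends_apart_le[of "{k..<m + 3}" for k]
    by (intro sum_mono add_mono mult_le_mono) auto
  also have "\<dots> = (\<Sum>l\<le>m. num_first_leaf (l + 1) * num_first_leaf (m - l + 1)
      + num_ncps l * (num_ends_apart (m - l + 2) + num_first_leaf (m - l + 1)))"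
    unfolding sum_shift_from_1 by (intro sum.cong refl) (simp add: Suc_diff_le)
  finally show ?thesis .
qed

lemma num_first_leaf_small: "n \<le> 1 \<Longrightarrow> num_first_leaf n = 0"
  using first_leaf_decomposition[of n] unfolding num_first_leaf_def by simp

lemma num_ends_apart_small: "n \<le> 2 \<Longrightarrow> num_ends_apart n = 0"
  using ends_apart_decomposition[of n] unfolding num_ends_apart_def by simp

lemma num_ncps_rec_pairs:
  assumes "0 < n"
  shows "num_ncps n \<le> num_ncps (n - 1) + num_first_leaf n
    + (\<Sum>(m1, m2)\<in>{(m1, m2). 0 < m1 \<and> m1 < m2 \<and> m2 < n}. two_neighbour_terms num_ncps
        (\<lambda>i. num_ncps i + num_first_leaf (i + 1)) num_first_leaf num_ends_apart (m1 - 1) (m2 - m1 - 1) (n - 1 - m2))"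
proof -
  have "card (ncps {1..<n}) \<le> num_ncps (n - 1)"
    using card_ncps_le[of "{1..<n}"] by simp
  moreover have "(\<Sum>(m1, m2)\<in>{(m1, m2). 0 < m1 \<and> m1 < m2 \<and> m2 < n}. card (hub_parts n m1 m2))
      \<le> (\<Sum>(m1, m2)\<in>{(m1, m2). 0 < m1 \<and> m1 < m2 \<and> m2 < n}. two_neighbour_terms num_ncps
        (\<lambda>i. num_ncps i + num_first_leaf (i + 1)) num_first_leaf num_ends_apart (m1 - 1) (m2 - m1 - 1) (n - 1 - m2))"
  proof (rule sum_mono)
    fix p assume "p \<in> {(m1, m2). 0 < m1 \<and> m1 < m2 \<and> m2 < n}"
    then obtain m1 m2 where "p = (m1, m2)" "0 < m1" "m1 < m2" "m2 < n"
      by blast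
    then show "(case p of (m1, m2) \<Rightarrow> card (hub_parts n m1 m2))
        \<le> (case p of (m1, m2) \<Rightarrow> two_neighbour_terms num_ncps (\<lambda>i. num_ncps i + num_first_leaf (i + 1))
          num_first_leaf num_ends_apart (m1 - 1) (m2 - m1 - 1) (n - 1 - m2))"
      using card_hub_parts_le[of m1 m2 n] by simp
  qed
  ultimately show ?thesis
    using ncps_decomposition[OF assms] hub_decomposition[of n]
    unfolding num_ncps_def num_first_leaf_def by linarith
qed

lemma sum_pairs_reindex:
  fixes m :: nat
  shows "(\<Sum>(m1, m2)\<in>{(m1, m2). 0 < m1 \<and> m1 < m2 \<and> m2 < m + 3}. g m1 m2) = (\<Sum>l\<le>m. \<Sum>k\<le>m-l. g (l + 1) (l + k + 2))"
proof -
  have "(\<Sum>(m1, m2)\<in>{(m1, m2). 0 < m1 \<and> m1 < m2 \<and> m2 < m + 3}. g m1 m2)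
      = (\<Sum>(l, k)\<in>Sigma {..m} (\<lambda>l. {..m-l}). g (l + 1) (l + k + 2))"
    by (rule sum.reindex_bij_witness[where j = "\<lambda>(m1, m2). (m1 - 1, m2 - m1 - 1)"
          and i = "\<lambda>(l, k). (l + 1, l + k + 2)"]) (auto simp: numeral_2_eq_2 Suc_diff_Suc)
  also have "\<dots> = (\<Sum>l\<le>m. \<Sum>k\<le>m-l. g (l + 1) (l + k + 2))"
    by (rule sum.Sigma[symmetric]) auto
  finally show ?thesis .
qed

lemma num_ncps_rec:
  "num_ncps (m + 3) \<le> num_ncps (m + 2) + num_first_leaf (m + 3) + (\<Sum>l\<le>m. \<Sum>k\<le>m-l.
     two_neighbour_terms num_ncps (\<lambda>i. num_ncps i + num_first_leaf (i + 1)) num_first_leaf num_ends_apart l k (m - l - k))"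
proof -
  let ?T = "two_neighbour_terms num_ncps (\<lambda>i. num_ncps i + num_first_leaf (i + 1)) num_first_leaf num_ends_apart"
  have "(\<Sum>(m1, m2)\<in>{(m1, m2). 0 < m1 \<and> m1 < m2 \<and> m2 < m + 3}. ?T (m1 - 1) (m2 - m1 - 1) (m + 3 - 1 - m2))
      = (\<Sum>l\<le>m. \<Sum>k\<le>m-l. ?T (l + 1 - 1) (l + k + 2 - (l + 1) - 1) (m + 3 - 1 - (l + k + 2)))"
    by (rule sum_pairs_reindex[where g = "\<lambda>m1 m2. ?T (m1 - 1) (m2 - m1 - 1) (m + 3 - 1 - m2)"])
  also have "\<dots> = (\<Sum>l\<le>m. \<Sum>k\<le>m-l. ?T l k (m - l - k))"
    by (intro sum.cong refl) simp
  finally show ?thesis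
    using num_ncps_rec_pairs[of "m + 3"] by simp
qed

lemma num_ncps_rec_small: "num_ncps 1 \<le> num_ncps 0 + num_first_leaf 1" "num_ncps 2 \<le> num_ncps 1 + num_first_leaf 2"
proof -
  have "{(m1, m2). 0 < m1 \<and> m1 < m2 \<and> m2 < (1::nat)} = {}" "{(m1, m2). 0 < m1 \<and> m1 < m2 \<and> m2 < (2::nat)} = {}"
    by auto
  then show "num_ncps 1 \<le> num_ncps 0 + num_first_leaf 1" "num_ncps 2 \<le> num_ncps 1 + num_first_leaf 2"
    using num_ncps_rec_pairs[of 1] num_ncps_rec_pairs[of 2] by (simp_all only: sum.empty) simp_all
qed

theorem num_ncps_growth: "real (num_ncps n) \<le> 1.59333 * 5.610718614 ^ n"
  by (rule growth_bound_from_recurrences[where g = num_first_leaf and x = num_ends_apart])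
    (fact num_ncps_0 num_ncps_rec_small num_ncps_rec num_first_leaf_rec num_ends_apart_rec
      | simp add: num_first_leaf_small num_ends_apart_small)+

section \<open>Points in convex position\<close>

definition cross :: "point \<Rightarrow> point \<Rightarrow> point \<Rightarrow> real" where
  "cross a b c = (fst b - fst a) * (snd c - snd a) - (snd b - snd a) * (fst c - fst a)"

lemma cross_rotate: "cross a b c = cross b c a"
  unfolding cross_def by (simp add: algebra_simps)

lemma cross_swap: "cross a c b = - cross a b c"
  unfolding cross_def by (simp add: algebra_simps)

lemma convex_position_not_in_hull:
  "convex_position S \<Longrightarrow> p \<in> S \<Longrightarrow> A \<subseteq> S - {p} \<Longrightarrow> p \<notin> convex hull A"
  unfolding convex_position_def using hull_mono by blast

text \<open>Barycentric coordinates: the weights of \<open>a\<close>, \<open>b\<close>, \<open>c\<close> are the areas of the triangles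
  opposite to them.\<close>
lemma mem_convex_hull_triangle:
  fixes a b c p :: point
  assumes "0 < cross a b c" "0 \<le> cross p b c" "0 \<le> cross a p c" "0 \<le> cross a b p"
  shows "p \<in> convex hull {a, b, c}"
proof -
  define D where "D = cross a b c"
  define u v w where "u = cross p b c / D" and "v = cross a p c / D" and "w = cross a b p / D"
  have D: "0 < D"
    unfolding D_def using assms by simp
  have "cross p b c + cross a p c + cross a b p = D"
    "D * fst p = cross p b c * fst a + cross a p c * fst b + cross a b p * fst c"
    "D * snd p = cross p b c * snd a + cross a p c * snd b + cross a b p * snd c"
    unfolding D_def cross_def by (simp_all add: algebra_simps)
  then have "u + v + w = 1" "p = u *\<^sub>R a + v *\<^sub>R b + w *\<^sub>R c"
    using D unfolding u_def v_def w_def by (simp_all add: field_simps prod_eq_iff)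
  moreover have "0 \<le> u" "0 \<le> v" "0 \<le> w"
    unfolding u_def v_def w_def using assms D by simp_all
  ultimately show ?thesis
    unfolding convex_hull_3 by blast
qed

lemma segments_intersect:
  fixes a b c d :: point
  assumes "0 < cross a b c" "0 < cross a b d" "0 < cross a c d" "0 < cross b c d"
  shows "convex hull {a, c} \<inter> convex hull {b, d} \<noteq> {}"
proof -
  define d1 d2 e1 e2 where "d1 = cross a b d" and "d2 = cross b c d" and "e1 = cross a b c" and "e2 = cross a c d"
  have pos: "0 < d1" "0 < d2" "0 < e1" "0 < e2"
    unfolding d1_def d2_def e1_def e2_def using assms by simp_all
  have sum: "e1 + e2 = d1 + d2"
    and fst: "d2 * fst a + d1 * fst c = e2 * fst b + e1 * fst d"
    and snd: "d2 * snd a + d1 * snd c = e2 * snd b + e1 * snd d"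
    unfolding d1_def d2_def e1_def e2_def cross_def by (simp_all add: algebra_simps)
  define s where "s = d1 + d2"
  have s: "0 < s"
    unfolding s_def using pos by simp
  define X where "X = (d2 / s) *\<^sub>R a + (d1 / s) *\<^sub>R c"
  have X: "X = (e2 / s) *\<^sub>R b + (e1 / s) *\<^sub>R d"
    using fst snd unfolding X_def by (simp add: prod_eq_iff add_divide_distrib[symmetric])
  have weights: "d2 / s + d1 / s = 1" "e2 / s + e1 / s = 1"
    using s sum unfolding s_def by (simp_all add: add_divide_distrib[symmetric])
  have "X \<in> convex hull {a, c}"
    unfolding convex_hull_2 X_def using pos s weights(1)
    by (intro CollectI exI[of _ "d2 / s"] exI[of _ "d1 / s"]) simp
  moreover have "X \<in> convex hull {b, d}"
    unfolding convex_hull_2 X using pos s weights(2)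
    by (intro CollectI exI[of _ "e2 / s"] exI[of _ "e1 / s"]) simp
  ultimately show ?thesis
    by blast
qed

definition lex_after :: "point \<Rightarrow> point \<Rightarrow> bool" where
  "lex_after p q \<longleftrightarrow> fst p < fst q \<or> (fst p = fst q \<and> snd p < snd q)"

text \<open>For \<open>q\<close> lexicographically after \<open>p\<close>, the direction of \<open>q - p\<close> has its angle in
  \<open>(-\<pi>/2, \<pi>/2]\<close>, and this key is a strictly increasing function of that angle.\<close>
definition angle_key :: "point \<Rightarrow> point \<Rightarrow> real" where
  "angle_key p q = (snd q - snd p) / ((fst q - fst p) + \<bar>snd q - snd p\<bar>)"

lemma lex_min_exists:
  assumes "finite S" "S \<noteq> {}"
  obtains p where "p \<in> S" "\<And>q. q \<in> S \<Longrightarrow> q \<noteq> p \<Longrightarrow> lex_after p q"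
proof -
  define x0 where "x0 = Min (fst ` S)"
  define T where "T = {p\<in>S. fst p = x0}"
  have "x0 \<in> fst ` S"
    unfolding x0_def using assms by simp
  then have T: "finite T" "T \<noteq> {}"
    unfolding T_def using assms by auto
  then obtain p where p: "p \<in> T" "snd p = Min (snd ` T)"
    by (metis (mono_tags, lifting) Min_in finite_imageI image_iff image_is_empty)
  have "lex_after p q" if "q \<in> S" "q \<noteq> p" for q
  proof (cases "fst q = x0")
    case True
    then have "q \<in> T"
      unfolding T_def using that by simp
    then have "snd p \<le> snd q"
      using p(2) T by simp
    moreover have "fst p = fst q"
      using p(1) True unfolding T_def by simp
    ultimately show ?thesis
      unfolding lex_after_def using that(2) by (metis order_le_less prod_eqI)
  next
    case False
    moreover have "x0 \<le> fst q"
      unfolding x0_def using that(1) assms(1) by simp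
    ultimately show ?thesis
      using p(1) unfolding T_def lex_after_def by simp
  qed
  then show ?thesis
    using that p(1) unfolding T_def by blast
qed

lemma sgn_key_numerator:
  fixes ux uy vx vy :: real
  assumes u: "ux > 0 \<or> (ux = 0 \<and> uy > 0)" and v: "vx > 0 \<or> (vx = 0 \<and> vy > 0)"
  shows "sgn (vy * (ux + \<bar>uy\<bar>) - uy * (vx + \<bar>vy\<bar>)) = sgn (ux * vy - uy * vx)"
proof (cases "0 \<le> uy"; cases "0 \<le> vy")
  assume "0 \<le> uy" "0 \<le> vy"
  then show ?thesis
    by (simp add: algebra_simps)
next
  assume "\<not> 0 \<le> uy" "\<not> 0 \<le> vy"
  then show ?thesis
    by (simp add: algebra_simps)
next
  assume signs: "0 \<le> uy" "\<not> 0 \<le> vy"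
  then have "ux * vy - uy * vx < 0" "vy * (ux + \<bar>uy\<bar>) - uy * (vx + \<bar>vy\<bar>) < 0"
    using u v by (smt (verit) mult_nonneg_nonneg mult_pos_neg mult_neg_pos zero_less_mult_iff)+
  then show ?thesis
    by simp
next
  assume signs: "\<not> 0 \<le> uy" "0 \<le> vy"
  then have "ux * vy - uy * vx > 0" "vy * (ux + \<bar>uy\<bar>) - uy * (vx + \<bar>vy\<bar>) > 0"
    using u v by (smt (verit) mult_nonneg_nonneg mult_pos_neg mult_neg_pos zero_less_mult_iff)+
  then show ?thesis
    by simp
qed

lemma sgn_angle_key_diff:
  assumes "lex_after p q" "lex_after p r"
  shows "sgn (angle_key p r - angle_key p q) = sgn (cross p q r)"
proof -
  define ux uy vx vy where "ux = fst q - fst p" and "uy = snd q - snd p" and "vx = fst r - fst p" and "vy = snd r - snd p"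
  have u: "ux > 0 \<or> (ux = 0 \<and> uy > 0)" and v: "vx > 0 \<or> (vx = 0 \<and> vy > 0)"
    using assms unfolding lex_after_def ux_def uy_def vx_def vy_def by auto
  then have Du: "0 < ux + \<bar>uy\<bar>" and Dv: "0 < vx + \<bar>vy\<bar>"
    by auto
  have "angle_key p r - angle_key p q = (vy * (ux + \<bar>uy\<bar>) - uy * (vx + \<bar>vy\<bar>)) / ((ux + \<bar>uy\<bar>) * (vx + \<bar>vy\<bar>))"
    unfolding angle_key_def ux_def uy_def vx_def vy_def using Du Dv
    by (simp add: ux_def uy_def vx_def vy_def field_simps)
  then have "sgn (angle_key p r - angle_key p q) = sgn (vy * (ux + \<bar>uy\<bar>) - uy * (vx + \<bar>vy\<bar>))"
    using Du Dv by (simp add: sgn_mult)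
  also have "\<dots> = sgn (cross p q r)"
    unfolding sgn_key_numerator[OF u v] by (simp add: cross_def ux_def uy_def vx_def vy_def)
  finally show ?thesis .
qed

lemma parallel_in_half_plane:
  fixes ux uy vx vy :: real
  assumes u: "ux > 0 \<or> (ux = 0 \<and> uy > 0)" and v: "vx > 0 \<or> (vx = 0 \<and> vy > 0)"
    and parallel: "ux * vy - uy * vx = 0"
  obtains t where "t > 0" "vx = t * ux" "vy = t * uy"
proof (cases "ux > 0")
  case True
  then have "vx > 0"
    using v parallel by (metis diff_zero less_numeral_extra(3) mult_eq_0_iff mult_pos_pos)
  then show ?thesis
    using True parallel by (intro that[of "vx / ux"]) (simp_all add: field_simps)
next
  case False
  then have "ux = 0" "uy > 0" "vx = 0" "vy > 0"
    using u v parallel by auto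
  then show ?thesis
    by (intro that[of "vy / uy"]) simp_all
qed

lemma convex_position_not_collinear:
  assumes cp: "convex_position S" and S: "p \<in> S" "q \<in> S" "r \<in> S" "q \<noteq> r"
    and after: "lex_after p q" "lex_after p r"
  shows "cross p q r \<noteq> 0"
proof
  assume collinear: "cross p q r = 0"
  have "q \<noteq> p" "r \<noteq> p"
    using after unfolding lex_after_def by auto
  have u: "fst q - fst p > 0 \<or> (fst q - fst p = 0 \<and> snd q - snd p > 0)"
    and v: "fst r - fst p > 0 \<or> (fst r - fst p = 0 \<and> snd r - snd p > 0)"
    using after unfolding lex_after_def by auto
  obtain t where t: "t > 0" "fst r - fst p = t * (fst q - fst p)" "snd r - snd p = t * (snd q - snd p)"
    using parallel_in_half_plane[OF u v] collinear unfolding cross_def by blast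
  show False
  proof (cases "t \<le> 1")
    case True
    have "r = (1 - t) *\<^sub>R p + t *\<^sub>R q"
      using t by (simp add: prod_eq_iff algebra_simps)
    then have "r \<in> convex hull {p, q}"
      unfolding convex_hull_2 using t(1) True by force
    then show False
      using convex_position_not_in_hull[OF cp S(3), of "{p, q}"] S \<open>r \<noteq> p\<close> by blast
  next
    case False
    have "q = (1 - 1 / t) *\<^sub>R p + (1 / t) *\<^sub>R r"
      using t by (simp add: prod_eq_iff field_simps)
    then have "q \<in> convex hull {p, r}"
      unfolding convex_hull_2 using False by force
    then show False
      using convex_position_not_in_hull[OF cp S(2), of "{p, r}"] S \<open>q \<noteq> p\<close> by blast
  qed
qed

text \<open>If \<open>a\<close>, \<open>b\<close>, \<open>c\<close> are met in this order when turning around \<open>p\<close>, a clockwise turn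
  \<open>a, b, c\<close> would put \<open>b\<close> inside the triangle \<open>p, a, c\<close>.\<close>
lemma convex_position_fan:
  assumes cp: "convex_position S" and S: "p \<in> S" "a \<in> S" "b \<in> S" "c \<in> S" "b \<noteq> p" "b \<noteq> a" "b \<noteq> c"
    and turns: "0 < cross p a b" "0 < cross p a c" "0 < cross p b c"
  shows "0 < cross a b c"
proof (rule ccontr)
  assume "\<not> 0 < cross a b c"
  then have "0 \<le> cross b a c"
    using cross_swap[of b c a] cross_rotate[of a b c] cross_rotate[of b c a] by linarith
  then have "b \<in> convex hull {p, a, c}"
    using mem_convex_hull_triangle[OF turns(2)] turns(1,3) by simp
  then show False
    using convex_position_not_in_hull[OF cp S(3), of "{p, a, c}"] S by blast
qed

lemma sorted_list_by_key:
  fixes f :: "'a \<Rightarrow> 'b::linorder"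
  assumes "finite A" "inj_on f A"
  obtains xs where "set xs = A" "distinct xs" "sorted_wrt (\<lambda>x y. f x < f y) xs"
proof -
  interpret folding_insort_key "(\<le>)" "(<)" A f
    by unfold_locales (rule assms(2))
  let ?xs = "linorder.sorted_key_list_of_set (\<le>) f A"
  have "sorted (map f ?xs)" "distinct (map f ?xs)"
    using sorted_sorted_key_list_of_set[OF order_refl] distinct_sorted_key_list_of_set[OF order_refl] by auto
  then have "sorted_wrt (<) (map f ?xs)"
    by (simp add: strict_sorted_iff)
  then show ?thesis
    using assms(1) \<open>distinct (map f ?xs)\<close> by (intro that[of ?xs]) (simp_all add: sorted_wrt_map distinct_map)
qed
lemma convex_position_angular_order:
  assumes fin: "finite S" and cp: "convex_position S" and "S \<noteq> {}"
  obtains p qs where "p \<in> S" "set qs = S - {p}" "distinct qs"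
    "\<And>j k. j < k \<Longrightarrow> k < length qs \<Longrightarrow> 0 < cross p (qs ! j) (qs ! k)"
proof -
  obtain p where p: "p \<in> S" "\<And>q. q \<in> S \<Longrightarrow> q \<noteq> p \<Longrightarrow> lex_after p q"
    using lex_min_exists[OF fin \<open>S \<noteq> {}\<close>] by blast
  have after: "lex_after p q" if "q \<in> S - {p}" for q
    using p(2) that by blast
  have "inj_on (angle_key p) (S - {p})"
  proof (rule inj_onI, rule ccontr)
    fix q r assume qr: "q \<in> S - {p}" "r \<in> S - {p}" "angle_key p q = angle_key p r" "q \<noteq> r"
    then have "cross p q r = 0"
      using sgn_angle_key_diff[OF after after] by (metis diff_self sgn_0 sgn_0_0)
    then show False
      using convex_position_not_collinear[OF cp p(1) _ _ qr(4) after after] qr by blast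
  qed
  then obtain qs where qs: "set qs = S - {p}" "distinct qs" "sorted_wrt (\<lambda>q r. angle_key p q < angle_key p r) qs"
    using sorted_list_by_key[of "S - {p}"] fin by blast
  have "0 < cross p (qs ! j) (qs ! k)" if "j < k" "k < length qs" for j k
  proof -
    have "angle_key p (qs ! j) < angle_key p (qs ! k)"
      using qs(3) that by (simp add: sorted_wrt_iff_nth_less)
    then have "sgn (angle_key p (qs ! k) - angle_key p (qs ! j)) = 1"
      by simp
    moreover have "qs ! j \<in> S - {p}" "qs ! k \<in> S - {p}"
      using nth_mem[of j qs] nth_mem[of k qs] qs(1) that by simp_all
    then have "sgn (angle_key p (qs ! k) - angle_key p (qs ! j)) = sgn (cross p (qs ! j) (qs ! k))"
      by (intro sgn_angle_key_diff after)
    ultimately show ?thesis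
      by (simp add: sgn_1_pos)
  qed
  then show ?thesis
    using that p(1) qs(1,2) by blast
qed

lemma convex_position_ccw_list:
  assumes fin: "finite S" and cp: "convex_position S"
  obtains ps where "distinct ps" "set ps = S"
    "\<And>i j k. i < j \<Longrightarrow> j < k \<Longrightarrow> k < length ps \<Longrightarrow> 0 < cross (ps ! i) (ps ! j) (ps ! k)"
proof (cases "S = {}")
  case True
  then show ?thesis
    using that[of "[]"] by simp
next
  case False
  obtain p qs where p: "p \<in> S" and qs: "set qs = S - {p}" "distinct qs"
    and fan: "\<And>j k. j < k \<Longrightarrow> k < length qs \<Longrightarrow> 0 < cross p (qs ! j) (qs ! k)"
    using convex_position_angular_order[OF fin cp False] by blast
  have mem: "qs ! j \<in> S - {p}" if "j < length qs" for j
    using nth_mem[OF that] qs(1) by simp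
  show ?thesis
  proof (rule that[of "p # qs"])
    show "distinct (p # qs)" "set (p # qs) = S"
      using qs p by auto
  next
    fix i j k assume ijk: "i < j" "j < k" "k < length (p # qs)"
    then obtain j' k' where jk: "j = Suc j'" "k = Suc k'" "j' < k'" "k' < length qs"
      by (metis Suc_less_SucD gr0_implies_Suc le_less_trans length_Cons not_le zero_le)
    show "0 < cross ((p # qs) ! i) ((p # qs) ! j) ((p # qs) ! k)"
    proof (cases i)
      case 0
      then show ?thesis
        using fan[OF jk(3,4)] jk by simp
    next
      case (Suc i')
      then have "i' < j'"
        using ijk jk by simp
      have distinct: "qs ! j' \<noteq> qs ! i'" "qs ! j' \<noteq> qs ! k'"
        using qs(2) \<open>i' < j'\<close> jk by (simp_all add: nth_eq_iff_index_eq)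
      have "0 < cross (qs ! i') (qs ! j') (qs ! k')"
        by (rule convex_position_fan[OF cp p]) (use mem \<open>i' < j'\<close> jk distinct fan in auto)
      then show ?thesis
        using Suc jk by simp
    qed
  qed
qed

section \<open>From ncp partitions to the combinatorial model\<close>

lemma ncp_partition_edge:
  "ncp_partition S E \<Longrightarrow> e \<in> E \<Longrightarrow> \<exists>a b. a \<in> S \<and> b \<in> S \<and> a \<noteq> b \<and> e = {a, b}"
  unfolding ncp_partition_def edges_on_def by blast

lemma ncp_partition_subset_Pow: "ncp_partition S E \<Longrightarrow> E \<subseteq> Pow S"
  using ncp_partition_edge by blast

lemma self_in_component: "a \<in> S \<Longrightarrow> a \<in> component S E a"
  unfolding component_def by simp

lemma edge_subset_component:
  assumes E: "ncp_partition S E" and u: "u \<in> component S E a" and e: "e \<in> E" "u \<in> e"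
  shows "e \<subseteq> component S E a"
proof
  fix w assume "w \<in> e"
  show "w \<in> component S E a"
  proof (cases "w = u")
    case False
    obtain x y where "x \<in> S" "y \<in> S" "e = {x, y}"
      using ncp_partition_edge[OF E e(1)] by blast
    then have "e = {u, w}" "w \<in> S"
      using e(2) \<open>w \<in> e\<close> False by auto
    then have "(u, w) \<in> adj E"
      using e(1) unfolding adj_def by simp
    moreover have "(a, u) \<in> (adj E)\<^sup>*"
      using u unfolding component_def by simp
    ultimately show ?thesis
      unfolding component_def using \<open>w \<in> S\<close> by simp
  qed (use u in simp)
qed

lemma ncp_partition_component_path:
  assumes "ncp_partition S E" "a \<in> S"
  obtains vs where "distinct vs" "set vs = component S E a"
    "{e\<in>E. e \<subseteq> component S E a} = {{vs ! i, vs ! Suc i} | i. Suc i < length vs}"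
  using assms unfolding ncp_partition_def is_path_component_def by blast

text \<open>An edge at \<open>p\<close> lies in the component of \<open>p\<close>, hence joins \<open>p\<close> to one of its (at most two)
  neighbours on the path listing that component.\<close>
lemma ncp_partition_edge_deg_le:
  assumes E: "ncp_partition S E"
  shows "edge_deg E p \<le> 2"
proof (cases "p \<in> S")
  case False
  then show ?thesis
    using edge_deg_outside[OF ncp_partition_subset_Pow[OF E]] by simp
next
  case True
  obtain vs where vs: "distinct vs" "set vs = component S E p"
    "{e\<in>E. e \<subseteq> component S E p} = {{vs ! i, vs ! Suc i} | i. Suc i < length vs}"
    using ncp_partition_component_path[OF E True] .
  obtain t where t: "t < length vs" "vs ! t = p"
    using vs(2) self_in_component[OF True] by (metis in_set_conv_nth)
  have "{e\<in>E. p \<in> e} \<subseteq> (\<lambda>i. {vs ! i, vs ! Suc i}) ` {t, t - 1}"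
  proof
    fix e assume e: "e \<in> {e\<in>E. p \<in> e}"
    then have "e \<in> {e\<in>E. e \<subseteq> component S E p}"
      using edge_subset_component[OF E self_in_component[OF True]] by blast
    then obtain i where i: "Suc i < length vs" "e = {vs ! i, vs ! Suc i}"
      unfolding vs(3) by blast
    then have "vs ! i = p \<or> vs ! Suc i = p"
      using e by auto
    then have "i = t \<or> Suc i = t"
      using nth_eq_iff_index_eq[OF vs(1)] t i(1) by (metis Suc_lessD)
    then show "e \<in> (\<lambda>i. {vs ! i, vs ! Suc i}) ` {t, t - 1}"
      using i(2) by auto
  qed
  then have "edge_deg E p \<le> card ((\<lambda>i. {vs ! i, vs ! Suc i}) ` {t, t - 1})"
    unfolding edge_deg_def by (intro card_mono) auto
  also have "\<dots> \<le> card {t, t - 1}"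
    by (rule card_image_le) simp
  also have "\<dots> \<le> 2"
    by (simp add: card_insert_if)
  finally show ?thesis .
qed

text \<open>The witness is the first vertex of the first path edge that belongs to \<open>F\<close>.\<close>
lemma path_edges_have_leaf:
  assumes vs: "distinct vs" and F: "F \<subseteq> {{vs ! i, vs ! Suc i} | i. Suc i < length vs}" "F \<noteq> {}"
  obtains u where "edge_deg F u = 1" "u \<in> set vs"
proof -
  define I where "I = {i. Suc i < length vs \<and> {vs ! i, vs ! Suc i} \<in> F}"
  have "I \<noteq> {}"
    using F unfolding I_def by blast
  moreover have "finite I"
    unfolding I_def by (rule finite_subset[of _ "{..<length vs}"]) auto
  ultimately have i0: "Min I \<in> I" "\<And>j. j \<in> I \<Longrightarrow> Min I \<le> j"
    by simp_all
  define u where "u = vs ! Min I"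
  have "{e\<in>F. u \<in> e} = {{vs ! Min I, vs ! Suc (Min I)}}"
  proof (intro equalityI subsetI)
    fix e assume "e \<in> {e\<in>F. u \<in> e}"
    then obtain j where j: "Suc j < length vs" "e = {vs ! j, vs ! Suc j}" "u \<in> e" "j \<in> I"
      using F(1) unfolding I_def by blast
    have "j = Min I \<or> Suc j = Min I"
      using j(2,3) j(1) nth_eq_iff_index_eq[OF vs] i0(1) unfolding u_def I_def by (auto dest: Suc_lessD)
    then have "j = Min I"
      using i0(2)[OF j(4)] by linarith
    then show "e \<in> {{vs ! Min I, vs ! Suc (Min I)}}"
      using j(2) by simp
  qed (use i0(1) in \<open>auto simp: I_def u_def\<close>)
  then have "edge_deg F u = 1"
    unfolding edge_deg_def by simp
  moreover have "u \<in> set vs"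
    using i0(1) unfolding I_def u_def by auto
  ultimately show ?thesis
    by (rule that)
qed

lemma ncp_partition_forest:
  assumes E: "ncp_partition S E"
  shows "forest E"
  unfolding forest_def
proof (intro allI impI)
  fix F assume F: "F \<subseteq> E" "\<forall>v. edge_deg F v \<noteq> 1"
  show "F = {}"
  proof (rule ccontr)
    assume "F \<noteq> {}"
    then obtain e where e: "e \<in> F"
      by blast
    obtain a b where ab: "a \<in> S" "e = {a, b}"
      using ncp_partition_edge[OF E] F(1) e by blast
    define C where "C = component S E a"
    obtain vs where vs: "distinct vs" "set vs = C" "{e\<in>E. e \<subseteq> C} = {{vs ! i, vs ! Suc i} | i. Suc i < length vs}"
      using ncp_partition_component_path[OF E ab(1)] unfolding C_def by blast
    have closed: "e' \<subseteq> C" if "e' \<in> F" "u \<in> e'" "u \<in> C" for e' u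
      using edge_subset_component[OF E] F(1) that unfolding C_def by blast
    have "e \<in> {e'\<in>F. e' \<subseteq> C}"
      using closed[OF e] self_in_component[OF ab(1)] ab(2) e unfolding C_def by blast
    then obtain u where u: "edge_deg {e'\<in>F. e' \<subseteq> C} u = 1" "u \<in> C"
      using path_edges_have_leaf[OF vs(1), of "{e'\<in>F. e' \<subseteq> C}"] vs(2,3) F(1) by blast
    have eq: "{x\<in>{e'\<in>F. e' \<subseteq> C}. u \<in> x} = {e'\<in>F. u \<in> e'}"
      using closed u(2) by blast
    have "edge_deg F u = edge_deg {e'\<in>F. e' \<subseteq> C} u"
      unfolding edge_deg_def by (simp only: eq)
    then have "edge_deg F u = 1"
      using u(1) by simp
    then show False
      using F(2) by blast
  qed
qed

lemma map_edges_the_inv_into: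
  assumes "bij_betw \<phi> V S" "E \<subseteq> Pow S"
  shows "map_edges \<phi> (map_edges (the_inv_into V \<phi>) E) = E"
proof -
  have "\<phi> ` the_inv_into V \<phi> ` e = e" if "e \<in> E" for e
  proof -
    have "\<forall>x\<in>e. \<phi> (the_inv_into V \<phi> x) = x"
      using that assms f_the_inv_into_f[of \<phi> V] unfolding bij_betw_def by blast
    then show ?thesis
      by (simp add: image_image)
  qed
  then show ?thesis
    unfolding map_edges_def image_image by simp
qed

lemma ccw_chords_cross:
  assumes E: "non_crossing E" "{a, c} \<in> E"
    and ccw: "0 < cross a b c" "0 < cross a b d" "0 < cross a c d" "0 < cross b c d"
  shows "{b, d} \<notin> E"
proof
  assume "{b, d} \<in> E"
  have "a \<noteq> b" "a \<noteq> d" "c \<noteq> b" "c \<noteq> d"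
    using ccw by (auto simp: cross_def)
  then have "{a, c} \<noteq> {b, d}" "{a, c} \<inter> {b, d} = {}"
    by (auto simp: doubleton_eq_iff)
  then have "convex hull {a, c} \<inter> convex hull {b, d} = {}"
    using E \<open>{b, d} \<in> E\<close> unfolding non_crossing_def by blast
  then show False
    using segments_intersect[OF ccw] by contradiction
qed

lemma ncp_on_of_ncp_partition:
  assumes \<phi>: "bij_betw \<phi> {..<n} S"
    and ccw: "\<And>i j k. i < j \<Longrightarrow> j < k \<Longrightarrow> k < n \<Longrightarrow> 0 < cross (\<phi> i) (\<phi> j) (\<phi> k)"
    and E: "ncp_partition S E"
  shows "ncp_on {..<n} (map_edges (the_inv_into {..<n} \<phi>) E)"
proof -
  let ?\<psi> = "the_inv_into {..<n} \<phi>"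
  let ?F = "map_edges ?\<psi> E"
  have \<psi>: "bij_betw ?\<psi> S {..<n}"
    by (rule bij_betw_the_inv_into[OF \<phi>])
  have inj: "inj_on ?\<psi> S"
    using \<psi> by (rule bij_betw_imp_inj_on)
  have EP: "E \<subseteq> Pow S"
    by (rule ncp_partition_subset_Pow[OF E])
  have recover: "map_edges \<phi> ?F = E"
    by (rule map_edges_the_inv_into[OF \<phi> EP])
  have FP: "?F \<subseteq> Pow {..<n}"
    using EP \<psi> unfolding map_edges_def bij_betw_def by auto
  show ?thesis
  proof (rule ncp_onI)
    fix e assume "e \<in> ?F"
    moreover have "?\<psi> ` S = {..<n}"
      using \<psi> by (simp add: bij_betw_def)
    ultimately show "\<exists>a b. a \<in> {..<n} \<and> b \<in> {..<n} \<and> a < b \<and> e = {a, b}"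
      using map_edges_ordered_pair[OF inj ncp_partition_edge[OF E]] by metis
  next
    fix a b c d :: nat
    assume order: "a < b" "b < c" "c < d" and ac: "{a, c} \<in> ?F"
    show "{b, d} \<notin> ?F"
    proof
      assume bd: "{b, d} \<in> ?F"
      have "d < n"
        using bd FP by auto
      have "\<phi> ` {a, c} \<in> map_edges \<phi> ?F" "\<phi> ` {b, d} \<in> map_edges \<phi> ?F"
        using ac bd unfolding map_edges_def by blast+
      then have "{\<phi> a, \<phi> c} \<in> E" "{\<phi> b, \<phi> d} \<in> E"
        unfolding recover by simp_all
      moreover have "non_crossing E"
        using E unfolding ncp_partition_def by simp
      ultimately show False
        using ccw_chords_cross order \<open>d < n\<close> ccw by (meson less_trans)
    qed
  next
    show "edge_deg ?F v \<le> 2" for v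
      using edge_deg_map_edges_le[OF inj EP ncp_partition_edge_deg_le[OF E]] .
  next
    show "forest ?F"
      using forest_map_edges_iff[OF inj EP] ncp_partition_forest[OF E] by blast
  qed
qed

lemma card_ncp_partitions_le:
  assumes "finite S" "convex_position S"
  shows "card {E. ncp_partition S E} \<le> num_ncps (card S)"
proof -
  obtain ps where ps: "distinct ps" "set ps = S"
    "\<And>i j k. i < j \<Longrightarrow> j < k \<Longrightarrow> k < length ps \<Longrightarrow> 0 < cross (ps ! i) (ps ! j) (ps ! k)"
    using convex_position_ccw_list[OF assms] by blast
  define n where "n = length ps"
  have ccw: "\<And>i j k. i < j \<Longrightarrow> j < k \<Longrightarrow> k < n \<Longrightarrow> 0 < cross (ps ! i) (ps ! j) (ps ! k)"
    using ps(3) unfolding n_def .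
  have \<phi>: "bij_betw ((!) ps) {..<n} S"
    unfolding n_def by (rule bij_betw_nth[OF ps(1)]) (simp_all add: ps(2))
  have "{E. ncp_partition S E} \<subseteq> map_edges ((!) ps) ` ncps {..<n}"
  proof
    fix E assume "E \<in> {E. ncp_partition S E}"
    then have E: "ncp_partition S E"
      by simp
    have "map_edges (the_inv_into {..<n} ((!) ps)) E \<in> ncps {..<n}"
      unfolding ncps_def using ncp_on_of_ncp_partition[OF \<phi> ccw E] by simp
    moreover have "E = map_edges ((!) ps) (map_edges (the_inv_into {..<n} ((!) ps)) E)"
      using map_edges_the_inv_into[OF \<phi> ncp_partition_subset_Pow[OF E]] by simp
    ultimately show "E \<in> map_edges ((!) ps) ` ncps {..<n}"
      by blast
  qed
  then have "card {E. ncp_partition S E} \<le> card (map_edges ((!) ps) ` ncps {..<n})"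
    by (intro card_mono finite_imageI finite_ncps) simp
  also have "\<dots> \<le> card (ncps {..<n})"
    by (intro card_image_le finite_ncps) simp
  finally have "card {E. ncp_partition S E} \<le> card (ncps {..<n})" .
  moreover have "card S = n"
    unfolding n_def using ps(1,2) distinct_card by blast
  ultimately show ?thesis
    unfolding num_ncps_def by simp
qed

theorem theorem1:
  "\<exists>C k. \<forall>S :: point set. finite S \<and> convex_position S \<longrightarrow>
     real (card {E. ncp_partition S E})
       \<le> C * real (card S + 1) ^ k * 5.610718614 ^ card S"
proof (intro exI[of _ "1.59333"] exI[of _ "0 :: nat"] allI impI)
  fix S :: "point set"
  assume S: "finite S \<and> convex_position S"
  have "real (card {E. ncp_partition S E}) \<le> real (num_ncps (card S))"
    using card_ncp_partitions_le S by simp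
  also have "\<dots> \<le> 1.59333 * 5.610718614 ^ card S"
    by (rule num_ncps_growth)
  finally show "real (card {E. ncp_partition S E}) \<le> 1.59333 * real (card S + 1) ^ 0 * 5.610718614 ^ card S"
    by simp
qed

end
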